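(* Let $\pi:H(\underline\kappa)\to\mathrm{End}_{\mathbb{C}}(V)$ be a representation and $\upsilon_0,\upsilon_n\in\mathbb{C}^*$. There exist unique elements $C_w^V\in\mathbb{C}(T)\otimes\mathrm{End}_{\mathbb{C}}(V)$ ($w\in W$) such that $C_e^V(\mathbf t)=\mathrm{Id}_V$, $C_{ww'}^V(\mathbf t)=C_w^V(\mathbf t)C_{w'}^V(w^{-1}\mathbf t)$ for all $w,w'\in W$, and $$C_{s_0}^V(\mathbf t)=K_0^V(q^{1/2}/t_1),\quad C_{s_i}^V(\mathbf t)=R_i^V(t_i/t_{i+1})\ (1\le i<n),\quad C_{s_n}^V(\mathbf t)=K_n^V(t_n).$$
   Context: $H(\underline\kappa)$ ($n\ge2$, $\underline\kappa=(\kappa_0,\kappa,\ldots,\kappa,\kappa_n)$): unital algebra with generators $T_0,\ldots,T_n$, braid relations $T_0T_1T_0T_1=T_1T_0T_1T_0$, $T_{n-1}T_nT_{n-1}T_n=T_nT_{n-1}T_nT_{n-1}$, $T_iT_{i+1}T_i=T_{i+1}T_iT_{i+1}$ ($1\le i<n-1$), $T_iT_j=T_jT_i$ ($|i-j|>1$), and $(T_j-\kappa_j)(T_j+\kappa_j^{-1})=0$. The affine Weyl group $W$ is the Coxeter group with generators $s_0,\ldots,s_n$ satisfying the same braid relations and $s_j^2=e$. Fix $q\in\mathbb{C}^*$ and a square root $q^{1/2}$. $W$ acts on $T=(\mathbb{C}^* )^n$ by $s_0\mathbf t=(qt_1^{-1},t_2,\ldots,t_n)$, $s_i\mathbf t$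 = swap of $t_i,t_{i+1}$ ($1\le i<n$), $s_n\mathbf t=(t_1,\ldots,t_{n-1},t_n^{-1})$. $K_0^V,R_i^V,K_n^V$ are $K_0^V(x)=\frac{\pi(T_0^{-1})+(\upsilon_0^{-1}-\upsilon_0)x-x^2\pi(T_0)}{\kappa_0^{-1}(1-\kappa_0\upsilon_0x)(1+\kappa_0\upsilon_0^{-1}x)}$, $R_i^V(x)=\frac{\pi(T_i^{-1})-x\pi(T_i)}{\kappa^{-1}(1-\kappa^2x)}$, $K_n^V(x)=\frac{\pi(T_n^{-1})+(\upsilon_n^{-1}-\upsilon_n)x-x^2\pi(T_n)}{\kappa_n^{-1}(1-\kappa_n\upsilon_nx)(1+\kappa_n\upsilon_n^{-1}x)}$. *)

theory Defs
  imports Complex_Main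
begin

definition torus :: "nat \<Rightarrow> (nat \<Rightarrow> complex) \<Rightarrow> bool" where
  "torus n t \<longleftrightarrow> (\<forall>i\<in>{1..n}. t i \<noteq> 0)"

definition is_mpoly :: "nat \<Rightarrow> ((nat \<Rightarrow> nat) \<Rightarrow> complex) \<Rightarrow> bool" where
  "is_mpoly n c \<longleftrightarrow> finite {a. c a \<noteq> 0} \<and> (\<forall>a. c a \<noteq> 0 \<longrightarrow> (\<forall>i. i \<notin> {1..n} \<longrightarrow> a i = 0))"

definition nonzero_mpoly :: "nat \<Rightarrow> ((nat \<Rightarrow> nat) \<Rightarrow> complex) \<Rightarrow> bool" where
  "nonzero_mpoly n c \<longleftrightarrow> is_mpoly n c \<and> (\<exists>a. c a \<noteq> 0)"

definition mpoly_eval :: "nat \<Rightarrow> ((nat \<Rightarrow> nat) \<Rightarrow> complex) \<Rightarrow> (nat \<Rightarrow> complex) \<Rightarrow> complex" where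
  "mpoly_eval n c t = (\<Sum>a\<in>{a. c a \<noteq> 0}. c a * (\<Prod>i\<in>{1..n}. t i ^ a i))"

section \<open>Elements of C(T) \<otimes> End_C(V), viewed as End(V)-valued functions on T,
  and their equality (agreement on a Zariski-dense open subset of T)\<close>

definition rat_end :: "(complex \<Rightarrow> 'v::ab_group_add \<Rightarrow> 'v) \<Rightarrow> nat \<Rightarrow> ((nat \<Rightarrow> complex) \<Rightarrow> 'v \<Rightarrow> 'v) \<Rightarrow> bool" where
  "rat_end sc n F \<longleftrightarrow>
     (\<exists>d (m::nat) p A. nonzero_mpoly n d \<and>
        (\<forall>k<m. is_mpoly n (p k) \<and> Vector_Spaces.linear sc sc (A k)) \<and>
        (\<forall>t. torus n t \<and> mpoly_eval n d t \<noteq> 0 \<longrightarrow>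
             F t = (\<lambda>v. \<Sum>k<m. sc (mpoly_eval n (p k) t / mpoly_eval n d t) (A k v))))"

definition generic_eq :: "nat \<Rightarrow> ((nat \<Rightarrow> complex) \<Rightarrow> 'b) \<Rightarrow> ((nat \<Rightarrow> complex) \<Rightarrow> 'b) \<Rightarrow> bool" where
  "generic_eq n F G \<longleftrightarrow>
     (\<exists>d. nonzero_mpoly n d \<and> (\<forall>t. torus n t \<and> mpoly_eval n d t \<noteq> 0 \<longrightarrow> F t = G t))"

section \<open>The affine Weyl group W: words in s_0..s_n modulo the Coxeter relations\<close>

definition valid_word :: "nat \<Rightarrow> nat list \<Rightarrow> bool" where
  "valid_word n w \<longleftrightarrow> set w \<subseteq> {..n}"

inductive cox_eq :: "nat \<Rightarrow> nat list \<Rightarrow> nat list \<Rightarrow> bool" for n where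
  refl: "cox_eq n w w"
| sym: "cox_eq n u w \<Longrightarrow> cox_eq n w u"
| trans: "cox_eq n u v \<Longrightarrow> cox_eq n v w \<Longrightarrow> cox_eq n u w"
| ctx: "cox_eq n x y \<Longrightarrow> cox_eq n (u @ x @ v) (u @ y @ v)"
| sq: "j \<le> n \<Longrightarrow> cox_eq n [j, j] []"
| braid0: "cox_eq n [0, 1, 0, 1] [1, 0, 1, 0]"
| braidn: "cox_eq n [n - 1, n, n - 1, n] [n, n - 1, n, n - 1]"
| braidi: "1 \<le> i \<Longrightarrow> i + 1 < n \<Longrightarrow> cox_eq n [i, i + 1, i] [i + 1, i, i + 1]"
| comm: "j \<le> n \<Longrightarrow> i + 1 < j \<Longrightarrow> cox_eq n [i, j] [j, i]"

text \<open>Action of the generators and of words on T (the word [j1,...,jk] is s_j1 ... s_jk).\<close>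

definition sact :: "nat \<Rightarrow> complex \<Rightarrow> nat \<Rightarrow> (nat \<Rightarrow> complex) \<Rightarrow> (nat \<Rightarrow> complex)" where
  "sact n q j t =
     (if j = 0 then t(1 := q / t 1)
      else if j < n then t(j := t (Suc j), Suc j := t j)
      else if j = n then t(n := inverse (t n))
      else t)"

definition wact :: "nat \<Rightarrow> complex \<Rightarrow> nat list \<Rightarrow> (nat \<Rightarrow> complex) \<Rightarrow> (nat \<Rightarrow> complex)" where
  "wact n q w t = foldr (sact n q) w t"

definition kap :: "nat \<Rightarrow> complex \<Rightarrow> complex \<Rightarrow> complex \<Rightarrow> nat \<Rightarrow> complex" where
  "kap n k0 k kn j = (if j = 0 then k0 else if j = n then kn else k)"

text \<open>pi(T_j) = P j; the tuple (P 0, ..., P n) of linear endomorphisms satisfying the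
  defining relations of H is the same as an algebra representation of H.\<close>

definition is_rep :: "(complex \<Rightarrow> 'v::ab_group_add \<Rightarrow> 'v) \<Rightarrow> nat \<Rightarrow> complex \<Rightarrow> complex \<Rightarrow> complex
    \<Rightarrow> (nat \<Rightarrow> 'v \<Rightarrow> 'v) \<Rightarrow> bool" where
  "is_rep sc n k0 k kn P \<longleftrightarrow>
     (\<forall>j\<le>n. Vector_Spaces.linear sc sc (P j)) \<and>
     P 0 \<circ> P 1 \<circ> P 0 \<circ> P 1 = P 1 \<circ> P 0 \<circ> P 1 \<circ> P 0 \<and>
     P (n - 1) \<circ> P n \<circ> P (n - 1) \<circ> P n = P n \<circ> P (n - 1) \<circ> P n \<circ> P (n - 1) \<and>
     (\<forall>i. 1 \<le> i \<and> i + 1 < n \<longrightarrow> P i \<circ> P (i + 1) \<circ> P i = P (i + 1) \<circ> P i \<circ> P (i + 1)) \<and>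
     (\<forall>i j. j \<le> n \<and> i + 1 < j \<longrightarrow> P i \<circ> P j = P j \<circ> P i) \<and>
     (\<forall>j\<le>n. (\<lambda>v. P j v - sc (kap n k0 k kn j) v) \<circ> (\<lambda>v. P j v + sc (inverse (kap n k0 k kn j)) v)
              = (\<lambda>v. 0))"

text \<open>pi(T_j^{-1}); in H one has T_j^{-1} = T_j - (kappa_j - kappa_j^{-1}).\<close>

definition Pinv :: "(complex \<Rightarrow> 'v::ab_group_add \<Rightarrow> 'v) \<Rightarrow> nat \<Rightarrow> complex \<Rightarrow> complex \<Rightarrow> complex
    \<Rightarrow> (nat \<Rightarrow> 'v \<Rightarrow> 'v) \<Rightarrow> nat \<Rightarrow> 'v \<Rightarrow> 'v" where
  "Pinv sc n k0 k kn P j = (\<lambda>v. P j v - sc (kap n k0 k kn j - inverse (kap n k0 k kn j)) v)"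

definition K0V where
  "K0V sc n k0 k kn P u0 x =
     (\<lambda>v. sc (inverse (inverse k0 * (1 - k0 * u0 * x) * (1 + k0 * inverse u0 * x)))
        (Pinv sc n k0 k kn P 0 v + sc ((inverse u0 - u0) * x) v - sc (x ^ 2) (P 0 v)))"

definition KnV where
  "KnV sc n k0 k kn P un x =
     (\<lambda>v. sc (inverse (inverse kn * (1 - kn * un * x) * (1 + kn * inverse un * x)))
        (Pinv sc n k0 k kn P n v + sc ((inverse un - un) * x) v - sc (x ^ 2) (P n v)))"

definition RV where
  "RV sc n k0 k kn P i x =
     (\<lambda>v. sc (inverse (inverse k * (1 - k ^ 2 * x))) (Pinv sc n k0 k kn P i v - sc x (P i v)))"

definition is_C_family where
  "is_C_family sc n k0 k kn P q qh u0 un C \<longleftrightarrow>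
     (\<forall>w. valid_word n w \<longrightarrow> rat_end sc n (C w)) \<and>
     (\<forall>w w'. valid_word n w \<and> valid_word n w' \<and> cox_eq n w w' \<longrightarrow> generic_eq n (C w) (C w')) \<and>
     generic_eq n (C []) (\<lambda>t. id) \<and>
     (\<forall>w w'. valid_word n w \<and> valid_word n w' \<longrightarrow>
        generic_eq n (C (w @ w')) (\<lambda>t. C w t \<circ> C w' (wact n q (rev w) t))) \<and>
     generic_eq n (C [0]) (\<lambda>t. K0V sc n k0 k kn P u0 (qh / t 1)) \<and>
     (\<forall>i. 1 \<le> i \<and> i < n \<longrightarrow> generic_eq n (C [i]) (\<lambda>t. RV sc n k0 k kn P i (t i / t (Suc i)))) \<and>
     generic_eq n (C [n]) (\<lambda>t. KnV sc n k0 k kn P un (t n))"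

end

theory Submission
  imports Defs "HOL-Computational_Algebra.Polynomial"
begin

text \<open>Writing a word as \<open>s\<^sub>j\<^sub>1 \<cdots> s\<^sub>j\<^sub>k\<close>, the cocycle rule forces \<open>C\<^sub>w(t)\<close> to be the
  product of the generator values at \<open>t\<close>, \<open>s\<^sub>j\<^sub>1 t\<close>, \<open>s\<^sub>j\<^sub>2 s\<^sub>j\<^sub>1 t\<close>, \<dots>; this gives uniqueness
  by induction on words. For existence, take this product as the definition on words and check
  that it respects the Coxeter relations. The braid relations of
  length four and three are the reflection equation for \<open>K\<close>, \<open>R\<close> and the Yang--Baxter equation
  for \<open>R\<close>; both are identities between products of degree-one polynomials in two Hecke
  generators, verified on coefficient vectors over the reduced words of the dihedral group they
  generate. The relation \<open>s\<^sub>j\<^sup>2 = e\<close> is unitarity, \<open>K(x) K(1/x) = 1\<close> and \<open>R(x) R(1/x) = 1\<close>,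
  valid away from finitely many poles. Identities valid off a hypersurface can be chained
  because two nonzero polynomials have a common non-zero on the torus; the Kronecker
  substitution \<open>t\<^sub>i = z\<^bsup>B\<^sup>i\<^sup>-\<^sup>1\<^esub>\<close> reduces this to one variable.\<close>

definition monomial_val :: "nat \<Rightarrow> (nat \<Rightarrow> nat) \<Rightarrow> (nat \<Rightarrow> complex) \<Rightarrow> complex" where
  "monomial_val n a t = (\<Prod>i\<in>{1..n}. t i ^ a i)"

lemma mpoly_eval_superset:
  assumes "finite S" "{a. p a \<noteq> 0} \<subseteq> S"
  shows "mpoly_eval n p t = (\<Sum>a\<in>S. p a * monomial_val n a t)"
  unfolding mpoly_eval_def monomial_val_def
  by (rule sum.mono_neutral_left) (use assms in auto)

definition poly_fun :: "nat \<Rightarrow> ((nat \<Rightarrow> complex) \<Rightarrow> complex) \<Rightarrow> bool" where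
  "poly_fun n f \<longleftrightarrow> (\<exists>p. is_mpoly n p \<and> (\<forall>t. torus n t \<longrightarrow> mpoly_eval n p t = f t))"

lemma poly_fun_cong: "poly_fun n f \<Longrightarrow> (\<And>t. torus n t \<Longrightarrow> f t = g t) \<Longrightarrow> poly_fun n g"
  unfolding poly_fun_def by metis

lemma monomial_val_add: "monomial_val n (\<lambda>i. b i + c i) t = monomial_val n b t * monomial_val n c t"
  unfolding monomial_val_def by (simp add: power_add prod.distrib)

lemma poly_fun_monomial:
  assumes "\<And>i. i \<notin> {1..n} \<Longrightarrow> a i = 0"
  shows "poly_fun n (\<lambda>t. c * monomial_val n a t)"
proof -
  define p where "p = (\<lambda>b. if b = a then c else 0)"
  have S: "{b. p b \<noteq> 0} \<subseteq> {a}" by (auto simp: p_def)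
  have "is_mpoly n p" unfolding is_mpoly_def using S assms by (auto intro: finite_subset simp: p_def)
  moreover have "mpoly_eval n p t = c * monomial_val n a t" for t
    by (subst mpoly_eval_superset[OF _ S]) (auto simp: p_def)
  ultimately show ?thesis unfolding poly_fun_def by blast
qed

lemma poly_fun_const: "poly_fun n (\<lambda>t. c)"
  using poly_fun_monomial[of n "\<lambda>_. 0" c] by (simp add: monomial_val_def)

lemma poly_fun_coord:
  assumes "i \<in> {1..n}"
  shows "poly_fun n (\<lambda>t. t i)"
proof -
  have "monomial_val n (\<lambda>j. if j = i then 1 else 0) t = t i" for t
    unfolding monomial_val_def using assms by (simp add: prod.delta if_distrib[of "\<lambda>e. t _ ^ e"] cong: if_cong)
  moreover have "poly_fun n (\<lambda>t. 1 * monomial_val n (\<lambda>j. if j = i then 1 else 0) t)"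
    by (rule poly_fun_monomial) (use assms in auto)
  ultimately show ?thesis by (auto elim: poly_fun_cong)
qed

lemma poly_fun_add: assumes "poly_fun n f" "poly_fun n g" shows "poly_fun n (\<lambda>t. f t + g t)"
proof -
  obtain p where p: "is_mpoly n p" "\<And>t. torus n t \<Longrightarrow> mpoly_eval n p t = f t"
    using assms(1) unfolding poly_fun_def by blast
  obtain q where q: "is_mpoly n q" "\<And>t. torus n t \<Longrightarrow> mpoly_eval n q t = g t"
    using assms(2) unfolding poly_fun_def by blast
  define S where "S = {a. p a \<noteq> 0} \<union> {a. q a \<noteq> 0}"
  have fS: "finite S" using p(1) q(1) unfolding S_def is_mpoly_def by auto
  have rS: "{a. p a + q a \<noteq> 0} \<subseteq> S" by (auto simp: S_def)
  have "is_mpoly n (\<lambda>a. p a + q a)"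
    unfolding is_mpoly_def using fS rS finite_subset p(1) q(1) unfolding is_mpoly_def
    by (metis (mono_tags, lifting) add.right_neutral add_0 mem_Collect_eq)
  moreover have "mpoly_eval n (\<lambda>a. p a + q a) t = f t + g t" if "torus n t" for t
    using p(2)[OF that] q(2)[OF that] mpoly_eval_superset[OF fS, of p n t] mpoly_eval_superset[OF fS, of q n t]
    by (subst mpoly_eval_superset[OF fS rS]) (auto simp: S_def distrib_right sum.distrib)
  ultimately show ?thesis unfolding poly_fun_def by blast
qed

lemma poly_fun_sum: "finite A \<Longrightarrow> (\<And>x. x \<in> A \<Longrightarrow> poly_fun n (f x)) \<Longrightarrow> poly_fun n (\<lambda>t. \<Sum>x\<in>A. f x t)"
proof (induction A rule: finite_induct)
  case empty then show ?case using poly_fun_const[of n 0] by simp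
next
  case (insert x F) then show ?case by (simp add: poly_fun_add)
qed

lemma poly_fun_mult: assumes "poly_fun n f" "poly_fun n g" shows "poly_fun n (\<lambda>t. f t * g t)"
proof -
  obtain p where p: "is_mpoly n p" "\<And>t. torus n t \<Longrightarrow> mpoly_eval n p t = f t"
    using assms(1) unfolding poly_fun_def by blast
  obtain q where q: "is_mpoly n q" "\<And>t. torus n t \<Longrightarrow> mpoly_eval n q t = g t"
    using assms(2) unfolding poly_fun_def by blast
  define S1 where "S1 = {a. p a \<noteq> 0}"
  define S2 where "S2 = {b. q b \<noteq> 0}"
  have fin: "finite S1" "finite S2" using p(1) q(1) unfolding S1_def S2_def is_mpoly_def by auto
  have "poly_fun n (\<lambda>t. \<Sum>a\<in>S1. \<Sum>b\<in>S2. (p a * q b) * monomial_val n (\<lambda>i. a i + b i) t)"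
    using p(1) q(1) unfolding is_mpoly_def S1_def S2_def
    by (intro poly_fun_sum poly_fun_monomial fin) auto
  then show ?thesis
  proof (rule poly_fun_cong)
    fix t assume t: "torus n t"
    have "f t * g t = mpoly_eval n p t * mpoly_eval n q t" using p(2)[OF t] q(2)[OF t] by simp
    also have "\<dots> = (\<Sum>a\<in>S1. \<Sum>b\<in>S2. (p a * q b) * (monomial_val n a t * monomial_val n b t))"
      unfolding mpoly_eval_def monomial_val_def S1_def S2_def by (simp add: sum_product mult_ac)
    finally show "(\<Sum>a\<in>S1. \<Sum>b\<in>S2. (p a * q b) * monomial_val n (\<lambda>i. a i + b i) t) = f t * g t"
      by (simp add: monomial_val_add)
  qed
qed

lemma poly_fun_prod: "finite A \<Longrightarrow> (\<And>x. x \<in> A \<Longrightarrow> poly_fun n (f x)) \<Longrightarrow> poly_fun n (\<lambda>t. \<Prod>x\<in>A. f x t)"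
proof (induction A rule: finite_induct)
  case empty then show ?case using poly_fun_const[of n 1] by simp
next
  case (insert x F) then show ?case by (simp add: poly_fun_mult)
qed

lemma poly_fun_power: "poly_fun n f \<Longrightarrow> poly_fun n (\<lambda>t. f t ^ m)"
proof (induction m)
  case 0 then show ?case using poly_fun_const[of n 1] by simp
next
  case (Suc m) then show ?case using poly_fun_mult[of n f "\<lambda>t. f t ^ m"] by simp
qed

lemma poly_fun_diff: "poly_fun n f \<Longrightarrow> poly_fun n g \<Longrightarrow> poly_fun n (\<lambda>t. f t - g t)"
proof -
  assume a: "poly_fun n f" "poly_fun n g"
  have "poly_fun n (\<lambda>t. f t + (-1) * g t)" using poly_fun_add[OF a(1) poly_fun_mult[OF poly_fun_const a(2)]] .
  then show ?thesis by (rule poly_fun_cong) simp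
qed

lemma poly_fun_eval: "is_mpoly n p \<Longrightarrow> poly_fun n (mpoly_eval n p)"
  unfolding poly_fun_def by blast

lemma nonzero_mpolyI: "is_mpoly n p \<Longrightarrow> mpoly_eval n p t \<noteq> 0 \<Longrightarrow> nonzero_mpoly n p"
  unfolding nonzero_mpoly_def mpoly_eval_def by (metis (mono_tags, lifting) empty_Collect_eq sum.empty)

lemma digit_sum_less: "(\<forall>i<m. a i < (B::nat)) \<Longrightarrow> (\<Sum>i<m. a i * B^i) < B^m"
proof (induction m)
  case 0 then show ?case by simp
next
  case (Suc m)
  then have "(\<Sum>i<m. a i * B^i) < B^m" "a m < B" by auto
  then have "(\<Sum>i<m. a i * B^i) + a m * B^m < B^m + a m * B^m" by simp
  also have "\<dots> = (Suc (a m)) * B^m" by simp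
  also have "\<dots> \<le> B * B^m" using \<open>a m < B\<close> by (intro mult_right_mono) auto
  finally show ?case by simp
qed

lemma digit_sum_inj: "(\<forall>i<m. a i < (B::nat)) \<Longrightarrow> (\<forall>i<m. b i < B) \<Longrightarrow>
   (\<Sum>i<m. a i * B^i) = (\<Sum>i<m. b i * B^i) \<Longrightarrow> \<forall>i<m. a i = b i"
proof (induction m)
  case 0 then show ?case by simp
next
  case (Suc m)
  have ba: "(\<Sum>i<m. a i * B^i) < B^m" and bb: "(\<Sum>i<m. b i * B^i) < B^m"
    using Suc.prems by (auto intro!: digit_sum_less)
  have e: "(\<Sum>i<m. a i * B^i) + a m * B^m = (\<Sum>i<m. b i * B^i) + b m * B^m"
    using Suc.prems(3) by simp
  have "((\<Sum>i<m. a i * B^i) + a m * B^m) mod B^m = (\<Sum>i<m. a i * B^i)" using ba by simp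
  moreover have "((\<Sum>i<m. b i * B^i) + b m * B^m) mod B^m = (\<Sum>i<m. b i * B^i)" using bb by simp
  ultimately have e1: "(\<Sum>i<m. a i * B^i) = (\<Sum>i<m. b i * B^i)" using e by metis
  have pos: "B^m > 0" using Suc.prems(1) by (metis gr_implies_not0 lessI zero_less_power gr0I)
  have "((\<Sum>i<m. a i * B^i) + a m * B^m) div B^m = a m" using ba pos by simp
  moreover have "((\<Sum>i<m. b i * B^i) + b m * B^m) div B^m = b m" using bb pos by simp
  ultimately have "a m = b m" using e by metis
  moreover have "\<forall>i<m. a i = b i" using Suc e1 by auto
  ultimately show ?case using less_Suc_eq by auto
qed

definition max_exponent :: "nat \<Rightarrow> ((nat \<Rightarrow> nat) \<Rightarrow> complex) \<Rightarrow> nat" where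
  "max_exponent n p = Max ((\<lambda>(a, i). a i) ` ({a. p a \<noteq> 0} \<times> {1..n}) \<union> {0})"

lemma max_exponent_ge: "is_mpoly n p \<Longrightarrow> p a \<noteq> 0 \<Longrightarrow> i \<in> {1..n} \<Longrightarrow> a i \<le> max_exponent n p"
  unfolding max_exponent_def is_mpoly_def by (rule Max_ge) force+

definition kronecker_point :: "nat \<Rightarrow> complex \<Rightarrow> nat \<Rightarrow> complex" where
  "kronecker_point B z = (\<lambda>i. z ^ (B ^ (i - 1)))"

definition kronecker_exponent :: "nat \<Rightarrow> nat \<Rightarrow> (nat \<Rightarrow> nat) \<Rightarrow> nat" where
  "kronecker_exponent n B a = (\<Sum>i<n. a (Suc i) * B ^ i)"

lemma torus_kronecker_point: "z \<noteq> 0 \<Longrightarrow> torus n (kronecker_point B z)"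
  unfolding torus_def kronecker_point_def by auto

lemma monomial_val_kronecker_point:
  "monomial_val n a (kronecker_point B z) = z ^ kronecker_exponent n B a"
proof -
  have "monomial_val n a (kronecker_point B z) = (\<Prod>i\<in>{1..n}. z ^ (B ^ (i - 1) * a i))"
    unfolding monomial_val_def kronecker_point_def by (simp add: power_mult)
  also have "\<dots> = z ^ (\<Sum>i\<in>{1..n}. B ^ (i - 1) * a i)" by (simp add: power_sum)
  also have "(\<Sum>i\<in>{1..n}. B ^ (i - 1) * a i) = kronecker_exponent n B a"
    unfolding kronecker_exponent_def by (simp add: sum.atLeast1_atMost_eq mult.commute)
  finally show ?thesis .
qed

lemma inj_on_kronecker_exponent:
  assumes p: "is_mpoly n p" and B: "max_exponent n p < B"
  shows "inj_on (kronecker_exponent n B) {a. p a \<noteq> 0}"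
proof (rule inj_onI)
  fix a b assume a: "a \<in> {a. p a \<noteq> 0}" and b: "b \<in> {a. p a \<noteq> 0}"
    and eq: "kronecker_exponent n B a = kronecker_exponent n B b"
  have digit: "c (Suc i) < B" if "p c \<noteq> 0" "i < n" for c i
    using max_exponent_ge[OF p that(1), of "Suc i"] that(2) B by simp
  have "\<forall>i<n. a (Suc i) = b (Suc i)"
  proof (rule digit_sum_inj)
    show "\<forall>i<n. a (Suc i) < B" "\<forall>i<n. b (Suc i) < B" using digit a b by auto
    show "(\<Sum>i<n. a (Suc i) * B ^ i) = (\<Sum>i<n. b (Suc i) * B ^ i)"
      using eq unfolding kronecker_exponent_def .
  qed
  moreover have "a i = 0 \<and> b i = 0" if "i \<notin> {1..n}" for i
    using p a b that unfolding is_mpoly_def by blast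
  ultimately have "a i = b i" for i
  proof (cases "i \<in> {1..n}")
    case True
    then obtain j where "i = Suc j" "j < n" by (cases i) auto
    with \<open>\<forall>i<n. a (Suc i) = b (Suc i)\<close> show ?thesis by simp
  qed auto
  then show "a = b" by auto
qed

lemma finite_zeros_kronecker_point:
  assumes p: "nonzero_mpoly n p" and B: "max_exponent n p < B"
  shows "finite {z. mpoly_eval n p (kronecker_point B z) = 0}"
proof -
  define S where "S = {a. p a \<noteq> 0}"
  have pm: "is_mpoly n p" using p unfolding nonzero_mpoly_def by simp
  have fS: "finite S" using pm unfolding S_def is_mpoly_def by simp
  have inj: "inj_on (kronecker_exponent n B) S"
    unfolding S_def by (rule inj_on_kronecker_exponent[OF pm B])
  define P where "P = (\<Sum>a\<in>S. monom (p a) (kronecker_exponent n B a))"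
  have ev: "mpoly_eval n p (kronecker_point B z) = poly P z" for z
    unfolding P_def poly_sum poly_monom
    by (subst mpoly_eval_superset[OF fS]) (auto simp: S_def monomial_val_kronecker_point)
  obtain a0 where a0: "a0 \<in> S" using p unfolding nonzero_mpoly_def S_def by auto
  have "coeff P (kronecker_exponent n B a0) = (\<Sum>a\<in>S. if a = a0 then p a else 0)"
    unfolding P_def coeff_sum coeff_monom using inj_onD[OF inj _ _ a0] by (intro sum.cong) auto
  also have "\<dots> = p a0" using fS a0 by (simp add: sum.delta)
  finally have "P \<noteq> 0" using a0 by (auto simp: S_def)
  then show ?thesis using poly_roots_finite[of P] ev by simp
qed

lemma ex_torus_point_nonzero2:
  assumes "nonzero_mpoly n p" "nonzero_mpoly n q"
  shows "\<exists>t. torus n t \<and> mpoly_eval n p t \<noteq> 0 \<and> mpoly_eval n q t \<noteq> 0"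
proof -
  define B where "B = Suc (max (max_exponent n p) (max_exponent n q))"
  define Z where "Z = {z. mpoly_eval n p (kronecker_point B z) = 0} \<union> {z. mpoly_eval n q (kronecker_point B z) = 0}"
  have "finite Z"
    unfolding Z_def B_def using assms by (auto intro!: finite_zeros_kronecker_point)
  then obtain z where "z \<notin> insert 0 Z"
    using ex_new_if_finite[OF infinite_UNIV_char_0[where 'a=complex]] by blast
  then show ?thesis unfolding Z_def using torus_kronecker_point[of z n B] by auto
qed

definition nonvanishing :: "nat \<Rightarrow> ((nat \<Rightarrow> complex) \<Rightarrow> complex) \<Rightarrow> bool" where
  "nonvanishing n f \<longleftrightarrow> poly_fun n f \<and> (\<exists>t. torus n t \<and> f t \<noteq> 0)"

lemma nonvanishing_mpoly:
  assumes "nonvanishing n f"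
  obtains p where "nonzero_mpoly n p" "\<And>t. torus n t \<Longrightarrow> mpoly_eval n p t = f t"
proof -
  obtain p t where p: "is_mpoly n p" "\<forall>t. torus n t \<longrightarrow> mpoly_eval n p t = f t" "torus n t" "f t \<noteq> 0"
    using assms unfolding nonvanishing_def poly_fun_def by blast
  then have "nonzero_mpoly n p" using nonzero_mpolyI[of n p t] by simp
  with p(2) show thesis using that by blast
qed

lemma nonvanishing_mult:
  assumes "nonvanishing n f" "nonvanishing n g"
  shows "nonvanishing n (\<lambda>t. f t * g t)"
proof -
  obtain p where p: "nonzero_mpoly n p" "\<And>t. torus n t \<Longrightarrow> mpoly_eval n p t = f t"
    using nonvanishing_mpoly[OF assms(1)] by blast
  obtain q where q: "nonzero_mpoly n q" "\<And>t. torus n t \<Longrightarrow> mpoly_eval n q t = g t"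
    using nonvanishing_mpoly[OF assms(2)] by blast
  obtain t where "torus n t" "mpoly_eval n p t \<noteq> 0" "mpoly_eval n q t \<noteq> 0"
    using ex_torus_point_nonzero2[OF p(1) q(1)] by blast
  then show ?thesis using assms p q unfolding nonvanishing_def by (auto intro!: poly_fun_mult)
qed

lemma nonvanishing_const: "c \<noteq> 0 \<Longrightarrow> nonvanishing n (\<lambda>t. c)"
  unfolding nonvanishing_def torus_def using poly_fun_const by fastforce

lemma nonvanishing_on_axis:
  assumes "poly_fun n g" "finite X" "\<And>z. z \<notin> X \<Longrightarrow> z \<noteq> 0 \<Longrightarrow> g (\<lambda>i. if i = m then z else 1) \<noteq> 0"
  shows "nonvanishing n g"
proof -
  obtain z where z: "z \<notin> insert 0 X"
    using ex_new_if_finite[OF infinite_UNIV_char_0[where 'a=complex]] assms(2) by blast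
  have "torus n (\<lambda>i. if i = m then z else 1)" using z unfolding torus_def by auto
  then show ?thesis unfolding nonvanishing_def using assms(1) assms(3) z by blast
qed

lemma generic_eq_iff:
  "generic_eq n F G \<longleftrightarrow> (\<exists>f. nonvanishing n f \<and> (\<forall>t. torus n t \<and> f t \<noteq> 0 \<longrightarrow> F t = G t))"
proof
  assume "generic_eq n F G"
  then obtain d where d: "nonzero_mpoly n d" "\<forall>t. torus n t \<and> mpoly_eval n d t \<noteq> 0 \<longrightarrow> F t = G t"
    unfolding generic_eq_def by blast
  obtain t where "torus n t" "mpoly_eval n d t \<noteq> 0" using ex_torus_point_nonzero2[OF d(1) d(1)] by blast
  then have "nonvanishing n (mpoly_eval n d)"
    unfolding nonvanishing_def using d(1) poly_fun_eval nonzero_mpoly_def by blast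
  with d(2) show "\<exists>f. nonvanishing n f \<and> (\<forall>t. torus n t \<and> f t \<noteq> 0 \<longrightarrow> F t = G t)" by blast
next
  assume "\<exists>f. nonvanishing n f \<and> (\<forall>t. torus n t \<and> f t \<noteq> 0 \<longrightarrow> F t = G t)"
  then obtain f where f: "nonvanishing n f" "\<forall>t. torus n t \<and> f t \<noteq> 0 \<longrightarrow> F t = G t" by blast
  obtain p where "nonzero_mpoly n p" "\<And>t. torus n t \<Longrightarrow> mpoly_eval n p t = f t"
    using nonvanishing_mpoly[OF f(1)] by blast
  then show "generic_eq n F G" unfolding generic_eq_def using f(2) by (intro exI[of _ p]) auto
qed

lemma generic_eqI: "(\<And>t. torus n t \<Longrightarrow> F t = G t) \<Longrightarrow> generic_eq n F G"
  unfolding generic_eq_iff using nonvanishing_const[of 1 n] by fastforce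

lemma generic_eq_sym: "generic_eq n F G \<Longrightarrow> generic_eq n G F"
  unfolding generic_eq_iff by (metis (no_types))

lemma generic_eq_comp:
  assumes "generic_eq n A B" "generic_eq n F G"
  shows "generic_eq n (\<lambda>t. A t \<circ> F t) (\<lambda>t. B t \<circ> G t)"
proof -
  obtain f where f: "nonvanishing n f" "\<forall>t. torus n t \<and> f t \<noteq> 0 \<longrightarrow> A t = B t"
    using assms(1) unfolding generic_eq_iff by blast
  obtain g where g: "nonvanishing n g" "\<forall>t. torus n t \<and> g t \<noteq> 0 \<longrightarrow> F t = G t"
    using assms(2) unfolding generic_eq_iff by blast
  show ?thesis unfolding generic_eq_iff
    using nonvanishing_mult[OF f(1) g(1)] f(2) g(2) by (intro exI[of _ "\<lambda>t. f t * g t"]) auto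
qed

lemma generic_eq_trans:
  assumes "generic_eq n F G" "generic_eq n G H"
  shows "generic_eq n F H"
proof -
  obtain f where f: "nonvanishing n f" "\<forall>t. torus n t \<and> f t \<noteq> 0 \<longrightarrow> F t = G t"
    using assms(1) unfolding generic_eq_iff by blast
  obtain g where g: "nonvanishing n g" "\<forall>t. torus n t \<and> g t \<noteq> 0 \<longrightarrow> G t = H t"
    using assms(2) unfolding generic_eq_iff by blast
  show ?thesis unfolding generic_eq_iff
    using nonvanishing_mult[OF f(1) g(1)] f(2) g(2) by (intro exI[of _ "\<lambda>t. f t * g t"]) auto
qed

lemma poly_fun_compose:
  assumes f: "poly_fun n f" and ht: "\<And>t. torus n t \<Longrightarrow> torus n (h t)"
    and hp: "\<And>i. i \<in> {1..n} \<Longrightarrow> poly_fun n (\<lambda>t. h t i)"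
  shows "poly_fun n (\<lambda>t. f (h t))"
proof -
  obtain p where p: "is_mpoly n p" "\<And>t. torus n t \<Longrightarrow> mpoly_eval n p t = f t" using f unfolding poly_fun_def by blast
  define S where "S = {a. p a \<noteq> 0}"
  have fS: "finite S" using p(1) unfolding is_mpoly_def S_def by simp
  have "poly_fun n (\<lambda>t. \<Sum>a\<in>S. p a * (\<Prod>i\<in>{1..n}. h t i ^ a i))"
    by (intro poly_fun_sum fS poly_fun_mult poly_fun_const poly_fun_prod finite_atLeastAtMost poly_fun_power hp)
  then show ?thesis
  proof (rule poly_fun_cong)
    fix t assume "torus n t"
    then have "f (h t) = mpoly_eval n p (h t)" using p(2) ht by simp
    also have "\<dots> = (\<Sum>a\<in>S. p a * (\<Prod>i\<in>{1..n}. h t i ^ a i))"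
      by (subst mpoly_eval_superset[OF fS]) (auto simp: S_def monomial_val_def)
    finally show "(\<Sum>a\<in>S. p a * (\<Prod>i\<in>{1..n}. h t i ^ a i)) = f (h t)" by simp
  qed
qed

lemma monomial_val_invert_coord:
  assumes m: "m \<in> {1..n}" and tm: "t m \<noteq> 0" and am: "a m \<le> N"
  shows "t m ^ N * monomial_val n a (t(m := \<rho> / t m))
       = \<rho> ^ a m * t m ^ (N - a m) * (\<Prod>i\<in>{1..n}-{m}. t i ^ a i)"
proof -
  have "monomial_val n a (t(m := \<rho> / t m)) = (\<rho> / t m) ^ a m * (\<Prod>i\<in>{1..n}-{m}. t i ^ a i)"
    unfolding monomial_val_def using m by (subst prod.remove[of _ m]) (auto intro!: prod.cong)
  moreover have "t m ^ N = t m ^ a m * t m ^ (N - a m)" using am by (simp flip: power_add)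
  moreover have "(\<rho> / t m) ^ a m * t m ^ a m = \<rho> ^ a m" using tm by (simp add: power_divide)
  ultimately show ?thesis using tm by (simp add: field_simps)
qed

lemma poly_fun_invert_coord:
  assumes f: "poly_fun n f" and m: "m \<in> {1..n}" and rho: "\<rho> \<noteq> 0"
  shows "\<exists>N0. \<forall>N\<ge>N0. poly_fun n (\<lambda>t. t m ^ N * f (t(m := \<rho> / t m)))"
proof -
  obtain p where p: "is_mpoly n p" "\<And>t. torus n t \<Longrightarrow> mpoly_eval n p t = f t"
    using f unfolding poly_fun_def by blast
  define S where "S = {a. p a \<noteq> 0}"
  have fS: "finite S" using p(1) unfolding is_mpoly_def S_def by simp
  show ?thesis
  proof (intro exI allI impI)
    fix N assume N: "N \<ge> max_exponent n p"
    have "poly_fun n (\<lambda>t. \<Sum>a\<in>S. p a * (\<rho> ^ a m * t m ^ (N - a m) * (\<Prod>i\<in>{1..n}-{m}. t i ^ a i)))"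
      using m by (intro poly_fun_sum fS poly_fun_mult poly_fun_const poly_fun_prod poly_fun_power poly_fun_coord) auto
    then show "poly_fun n (\<lambda>t. t m ^ N * f (t(m := \<rho> / t m)))"
    proof (rule poly_fun_cong)
      fix t assume t: "torus n t"
      have tm: "t m \<noteq> 0" using t m unfolding torus_def by auto
      have t': "torus n (t(m := \<rho> / t m))" using t tm rho unfolding torus_def by auto
      have "t m ^ N * f (t(m := \<rho> / t m)) = t m ^ N * (\<Sum>a\<in>S. p a * monomial_val n a (t(m := \<rho> / t m)))"
        using p(2)[OF t'] mpoly_eval_superset[OF fS, of p n] by (simp add: S_def)
      also have "\<dots> = (\<Sum>a\<in>S. p a * (t m ^ N * monomial_val n a (t(m := \<rho> / t m))))"
        by (simp add: sum_distrib_left mult_ac)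
      also have "\<dots> = (\<Sum>a\<in>S. p a * (\<rho> ^ a m * t m ^ (N - a m) * (\<Prod>i\<in>{1..n}-{m}. t i ^ a i)))"
      proof (rule sum.cong[OF HOL.refl])
        fix a assume "a \<in> S"
        then have "a m \<le> N" using max_exponent_ge[OF p(1) _ m] N unfolding S_def by fastforce
        then show "p a * (t m ^ N * monomial_val n a (t(m := \<rho> / t m)))
            = p a * (\<rho> ^ a m * t m ^ (N - a m) * (\<Prod>i\<in>{1..n}-{m}. t i ^ a i))"
          by (simp add: monomial_val_invert_coord[OF m, of t, OF tm])
      qed
      finally show "(\<Sum>a\<in>S. p a * (\<rho> ^ a m * t m ^ (N - a m) * (\<Prod>i\<in>{1..n}-{m}. t i ^ a i))) =
         t m ^ N * f (t(m := \<rho> / t m))" by simp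
    qed
  qed
qed

text \<open>\<open>s\<^sub>0\<close> inverts \<open>t\<^sub>1\<close> and \<open>s\<^sub>n\<close> inverts \<open>t\<^sub>n\<close>; the other generators only permute
  coordinates, so for them any coordinate will do.\<close>

definition inverted_coord :: "nat \<Rightarrow> nat \<Rightarrow> nat" where
  "inverted_coord n j = (if j = n then n else 1)"

lemma inverted_coord_in: "n \<ge> 1 \<Longrightarrow> inverted_coord n j \<in> {1..n}" unfolding inverted_coord_def by auto

lemma torus_sact: "q \<noteq> 0 \<Longrightarrow> torus n t \<Longrightarrow> torus n (sact n q j t)"
  unfolding torus_def sact_def by auto

lemma sact_sact: "q \<noteq> 0 \<Longrightarrow> sact n q j (sact n q j t) = t"
  unfolding sact_def by (auto simp: fun_eq_iff)

lemma poly_fun_sact_cleared: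
  assumes f: "poly_fun n f" and q: "q \<noteq> 0" and n: "n \<ge> 1"
  shows "\<exists>N0. \<forall>N\<ge>N0. poly_fun n (\<lambda>t. t (inverted_coord n j) ^ N * f (sact n q j t))"
proof -
  consider "j = 0" | "0 < j \<and> j < n" | "j = n" | "j > n" by linarith
  then show ?thesis
  proof cases
    case 1
    then show ?thesis using poly_fun_invert_coord[OF f _ q, of 1] n by (simp add: sact_def inverted_coord_def)
  next
    case 2
    have "poly_fun n (\<lambda>t. f (sact n q j t))"
    proof (rule poly_fun_compose[OF f])
      show "torus n (sact n q j t)" if "torus n t" for t using torus_sact[OF q that] .
      fix i assume i: "i \<in> {1..n}"
      have "(\<lambda>t. sact n q j t i) = (\<lambda>t. t (if i = j then Suc j else if i = Suc j then j else i))"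
        using 2 by (auto simp: sact_def fun_eq_iff)
      moreover have "poly_fun n (\<lambda>t. t (if i = j then Suc j else if i = Suc j then j else i))"
        by (rule poly_fun_coord) (use i 2 in auto)
      ultimately show "poly_fun n (\<lambda>t. sact n q j t i)" by simp
    qed
    then have "poly_fun n (\<lambda>t. t (inverted_coord n j) ^ N * f (sact n q j t))" for N
      by (intro poly_fun_mult poly_fun_power poly_fun_coord inverted_coord_in n)
    then show ?thesis by blast
  next
    case 3
    have "\<exists>N0. \<forall>N\<ge>N0. poly_fun n (\<lambda>t. t n ^ N * f (t(n := 1 / t n)))"
      by (rule poly_fun_invert_coord[OF f]) (use n in auto)
    then show ?thesis using 3 n by (simp add: sact_def inverted_coord_def inverse_eq_divide)
  next
    case 4
    then have "poly_fun n (\<lambda>t. t (inverted_coord n j) ^ N * f (sact n q j t))" for N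
      using poly_fun_mult[OF poly_fun_power[OF poly_fun_coord[OF inverted_coord_in[OF n]]] f] by (simp add: sact_def)
    then show ?thesis by blast
  qed
qed

lemma nonvanishing_sact_cleared:
  assumes g: "nonvanishing n g" and q: "q \<noteq> 0" and n: "n \<ge> 1"
    and poly: "poly_fun n (\<lambda>t. t (inverted_coord n j) ^ N * g (sact n q j t))"
  shows "nonvanishing n (\<lambda>t. t (inverted_coord n j) ^ N * g (sact n q j t))"
proof -
  obtain t0 where t0: "torus n t0" "g t0 \<noteq> 0" using g unfolding nonvanishing_def by blast
  have t1: "torus n (sact n q j t0)" by (rule torus_sact[OF q t0(1)])
  then have "sact n q j t0 (inverted_coord n j) \<noteq> 0" using inverted_coord_in[OF n] unfolding torus_def by blast
  then show ?thesis unfolding nonvanishing_def using poly t1 t0(2) sact_sact[OF q] by auto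
qed

lemma generic_eq_sact:
  assumes FG: "generic_eq n F G" and q: "q \<noteq> 0" and n: "n \<ge> 1"
  shows "generic_eq n (\<lambda>t. F (sact n q j t)) (\<lambda>t. G (sact n q j t))"
proof -
  obtain f where f: "nonvanishing n f" "\<forall>t. torus n t \<and> f t \<noteq> 0 \<longrightarrow> F t = G t"
    using FG unfolding generic_eq_iff by blast
  obtain N where "poly_fun n (\<lambda>t. t (inverted_coord n j) ^ N * f (sact n q j t))"
    using poly_fun_sact_cleared[OF _ q n] f(1) unfolding nonvanishing_def by blast
  then have "nonvanishing n (\<lambda>t. t (inverted_coord n j) ^ N * f (sact n q j t))"
    by (rule nonvanishing_sact_cleared[OF f(1) q n])
  moreover have "F (sact n q j t) = G (sact n q j t)"
    if "torus n t" "t (inverted_coord n j) ^ N * f (sact n q j t) \<noteq> 0" for t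
    using f(2) torus_sact[OF q that(1)] that(2) by simp
  ultimately show ?thesis unfolding generic_eq_iff by blast
qed

lemma generic_eq_wact:
  assumes q: "q \<noteq> 0" and n: "n \<ge> 1"
  shows "generic_eq n F G \<Longrightarrow> generic_eq n (\<lambda>t. F (wact n q w t)) (\<lambda>t. G (wact n q w t))"
proof (induction w arbitrary: F G)
  case (Cons j w)
  have "generic_eq n (\<lambda>t. F (sact n q j t)) (\<lambda>t. G (sact n q j t))"
    by (rule generic_eq_sact[OF Cons.prems q n])
  from Cons.IH[OF this] show ?case by (simp add: wact_def)
qed (simp add: wact_def)

lemma lin_add: "Vector_Spaces.linear sc sc A \<Longrightarrow> A (x + y) = A x + A y"
  unfolding linear_iff_module_hom by (rule module_hom.add)

lemma lin_scale: "Vector_Spaces.linear sc sc A \<Longrightarrow> A (sc c x) = sc c (A x)"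
  unfolding linear_iff_module_hom by (rule module_hom.scale)

lemma lin_sum: "Vector_Spaces.linear sc sc A \<Longrightarrow> A (sum f S) = (\<Sum>a\<in>S. A (f a))"
  unfolding linear_iff_module_hom by (rule module_hom.sum)

lemma lin_comp: "Vector_Spaces.linear sc sc A \<Longrightarrow> Vector_Spaces.linear sc sc B \<Longrightarrow> Vector_Spaces.linear sc sc (\<lambda>v. A (B v))"
  using Vector_Spaces.linear_compose[of sc sc B sc A] by (simp add: comp_def)

lemma lin_id: "vector_space sc \<Longrightarrow> Vector_Spaces.linear sc sc (\<lambda>v. v)"
  using vector_space.linear_id[of sc] by (simp add: id_def)

lemma sum_lessThan_mult_div_mod:
  fixes X :: "nat \<Rightarrow> nat \<Rightarrow> 'b::comm_monoid_add"
  shows "(\<Sum>r<m * m'. X (r div m') (r mod m')) = (\<Sum>k<m. \<Sum>l<m'. X k l)"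
proof -
  have "(\<Sum>r<m * m'. X (r div m') (r mod m')) = (\<Sum>kl\<in>{..<m} \<times> {..<m'}. X (fst kl) (snd kl))"
  proof (rule sum.reindex_bij_witness[of _ "\<lambda>kl. fst kl * m' + snd kl" "\<lambda>r. (r div m', r mod m')"])
    fix r assume r: "r \<in> {..<m * m'}"
    then have "m' > 0" by (cases m') auto
    show "fst (r div m', r mod m') * m' + snd (r div m', r mod m') = r" by simp
    show "(r div m', r mod m') \<in> {..<m} \<times> {..<m'}" using r \<open>m' > 0\<close>
      by (auto simp: less_mult_imp_div_less)
    show "X (fst (r div m', r mod m')) (snd (r div m', r mod m')) = X (r div m') (r mod m')" by simp
  next
    fix kl :: "nat \<times> nat" assume kl: "kl \<in> {..<m} \<times> {..<m'}"
    then obtain k l where [simp]: "kl = (k, l)" and k: "k < m" and l: "l < m'" by auto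
    show "((fst kl * m' + snd kl) div m', (fst kl * m' + snd kl) mod m') = kl" using l by simp
    have "k * m' + l < k * m' + m'" using l by simp
    also have "\<dots> = Suc k * m'" by simp
    also have "\<dots> \<le> m * m'" using k by (intro mult_right_mono) auto
    finally show "fst kl * m' + snd kl \<in> {..<m * m'}" by simp
  qed
  also have "\<dots> = (\<Sum>k<m. \<Sum>l<m'. X k l)" by (simp add: sum.cartesian_product case_prod_beta)
  finally show ?thesis .
qed

lemma rat_end_iff:
  "rat_end sc n F \<longleftrightarrow> (\<exists>g (m::nat) f A. nonvanishing n g \<and>
      (\<forall>k<m. poly_fun n (f k) \<and> Vector_Spaces.linear sc sc (A k)) \<and>
      (\<forall>t. torus n t \<and> g t \<noteq> 0 \<longrightarrow> F t = (\<lambda>v. \<Sum>k<m. sc (f k t / g t) (A k v))))"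
    (is "_ \<longleftrightarrow> ?rhs")
proof
  assume "rat_end sc n F"
  then obtain d and m :: nat and p A where d: "nonzero_mpoly n d"
    and pA: "\<forall>k<m. is_mpoly n (p k) \<and> Vector_Spaces.linear sc sc (A k)"
    and F: "\<forall>t. torus n t \<and> mpoly_eval n d t \<noteq> 0 \<longrightarrow>
              F t = (\<lambda>v. \<Sum>k<m. sc (mpoly_eval n (p k) t / mpoly_eval n d t) (A k v))"
    unfolding rat_end_def by blast
  obtain t where "torus n t" "mpoly_eval n d t \<noteq> 0" using ex_torus_point_nonzero2[OF d d] by blast
  then have "nonvanishing n (mpoly_eval n d)"
    unfolding nonvanishing_def using d poly_fun_eval nonzero_mpoly_def by blast
  moreover have "\<forall>k<m. poly_fun n (mpoly_eval n (p k)) \<and> Vector_Spaces.linear sc sc (A k)"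
    using pA poly_fun_eval by blast
  ultimately show ?rhs using F
    by (intro exI[of _ "mpoly_eval n d"] exI[of _ m] exI[of _ "\<lambda>k. mpoly_eval n (p k)"] exI[of _ A]) simp
next
  assume ?rhs
  then obtain g and m :: nat and f A where g: "nonvanishing n g"
    and fA: "\<forall>k<m. poly_fun n (f k) \<and> Vector_Spaces.linear sc sc (A k)"
    and F: "\<forall>t. torus n t \<and> g t \<noteq> 0 \<longrightarrow> F t = (\<lambda>v. \<Sum>k<m. sc (f k t / g t) (A k v))"
    by blast
  obtain d where d: "nonzero_mpoly n d" "\<And>t. torus n t \<Longrightarrow> mpoly_eval n d t = g t"
    using nonvanishing_mpoly[OF g] by blast
  have "\<forall>k. \<exists>p. k < m \<longrightarrow> is_mpoly n p \<and> (\<forall>t. torus n t \<longrightarrow> mpoly_eval n p t = f k t)"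
    using fA unfolding poly_fun_def by blast
  then obtain p where p: "\<And>k. k < m \<Longrightarrow> is_mpoly n (p k) \<and> (\<forall>t. torus n t \<longrightarrow> mpoly_eval n (p k) t = f k t)"
    by metis
  show "rat_end sc n F" unfolding rat_end_def
  proof (intro exI conjI allI impI)
    show "nonzero_mpoly n d" by (rule d(1))
    fix k assume "k < m"
    then show "is_mpoly n (p k)" "Vector_Spaces.linear sc sc (A k)" using p fA by auto
  next
    fix t assume t: "torus n t \<and> mpoly_eval n d t \<noteq> 0"
    then have "F t = (\<lambda>v. \<Sum>k<m. sc (f k t / g t) (A k v))" using F d(2) by auto
    also have "\<dots> = (\<lambda>v. \<Sum>k<m. sc (mpoly_eval n (p k) t / mpoly_eval n d t) (A k v))"
      using p d(2) t by (intro ext sum.cong) auto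
    finally show "F t = (\<lambda>v. \<Sum>k<m. sc (mpoly_eval n (p k) t / mpoly_eval n d t) (A k v))" .
  qed
qed

lemma rat_end_comp:
  assumes vs: "vector_space sc" and F: "rat_end sc n F" and G: "rat_end sc n G"
  shows "rat_end sc n (\<lambda>t. F t \<circ> G t)"
proof -
  interpret vector_space sc by fact
  obtain g and m :: nat and f A where g: "nonvanishing n g"
    and fA: "\<forall>k<m. poly_fun n (f k) \<and> Vector_Spaces.linear sc sc (A k)"
    and Fe: "\<forall>t. torus n t \<and> g t \<noteq> 0 \<longrightarrow> F t = (\<lambda>v. \<Sum>k<m. sc (f k t / g t) (A k v))"
    using F unfolding rat_end_iff by blast
  obtain g' and m' :: nat and f' A' where g': "nonvanishing n g'"
    and fA': "\<forall>k<m'. poly_fun n (f' k) \<and> Vector_Spaces.linear sc sc (A' k)"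
    and Ge: "\<forall>t. torus n t \<and> g' t \<noteq> 0 \<longrightarrow> G t = (\<lambda>v. \<Sum>k<m'. sc (f' k t / g' t) (A' k v))"
    using G unfolding rat_end_iff by blast
  define ff where "ff = (\<lambda>r t. f (r div m') t * f' (r mod m') t)"
  define AA where "AA = (\<lambda>r v. A (r div m') (A' (r mod m') v))"
  show ?thesis unfolding rat_end_iff
  proof (intro exI conjI allI impI)
    show "nonvanishing n (\<lambda>t. g t * g' t)" by (rule nonvanishing_mult[OF g g'])
    fix r assume r: "r < m * m'"
    then have "m' > 0" by (cases m') auto
    then have "r div m' < m" "r mod m' < m'" using r by (auto simp: less_mult_imp_div_less)
    then show "poly_fun n (ff r)" "Vector_Spaces.linear sc sc (AA r)"
      using fA fA' unfolding ff_def AA_def by (auto intro: poly_fun_mult lin_comp)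
  next
    fix t assume t: "torus n t \<and> g t * g' t \<noteq> 0"
    show "F t \<circ> G t = (\<lambda>v. \<Sum>r<m * m'. sc (ff r t / (g t * g' t)) (AA r v))"
    proof
      fix v
      have "(F t \<circ> G t) v = (\<Sum>k<m. sc (f k t / g t) (A k (\<Sum>l<m'. sc (f' l t / g' t) (A' l v))))"
        using Fe Ge t by simp
      also have "\<dots> = (\<Sum>k<m. \<Sum>l<m'. sc (f k t * f' l t / (g t * g' t)) (A k (A' l v)))"
      proof (rule sum.cong[OF HOL.refl])
        fix k assume "k \<in> {..<m}"
        then have lin: "Vector_Spaces.linear sc sc (A k)" using fA by simp
        show "sc (f k t / g t) (A k (\<Sum>l<m'. sc (f' l t / g' t) (A' l v))) =
            (\<Sum>l<m'. sc (f k t * f' l t / (g t * g' t)) (A k (A' l v)))"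
          by (simp add: lin_sum[OF lin] lin_scale[OF lin] scale_sum_right times_divide_times_eq)
      qed
      also have "\<dots> = (\<Sum>r<m * m'. sc (ff r t / (g t * g' t)) (AA r v))"
        unfolding ff_def AA_def by (rule sum_lessThan_mult_div_mod[symmetric])
      finally show "(F t \<circ> G t) v = (\<Sum>r<m * m'. sc (ff r t / (g t * g' t)) (AA r v))" .
    qed
  qed
qed

lemma rat_end_sact:
  assumes F: "rat_end sc n F" and q: "q \<noteq> 0" and n: "n \<ge> 1"
  shows "rat_end sc n (\<lambda>t. F (sact n q j t))"
proof -
  obtain g and m :: nat and f A where g: "nonvanishing n g"
    and fA: "\<forall>k<m. poly_fun n (f k) \<and> Vector_Spaces.linear sc sc (A k)"
    and Fe: "\<forall>t. torus n t \<and> g t \<noteq> 0 \<longrightarrow> F t = (\<lambda>v. \<Sum>k<m. sc (f k t / g t) (A k v))"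
    using F unfolding rat_end_iff by blast
  let ?clear = "\<lambda>N h t. t (inverted_coord n j) ^ N * h (sact n q j t)"
  have "\<forall>k. \<exists>N0. k < m \<longrightarrow> (\<forall>N\<ge>N0. poly_fun n (?clear N (f k)))"
    using poly_fun_sact_cleared[OF _ q n] fA by blast
  then obtain N0 where N0: "\<And>k N. k < m \<Longrightarrow> N \<ge> N0 k \<Longrightarrow> poly_fun n (?clear N (f k))"
    by metis
  obtain Ng where Ng: "\<And>N. N \<ge> Ng \<Longrightarrow> poly_fun n (?clear N g)"
    using poly_fun_sact_cleared[OF _ q n] g unfolding nonvanishing_def by blast
  define N where "N = Ng + (\<Sum>k<m. N0 k)"
  have NN: "N \<ge> N0 k" if "k < m" for k
    using that unfolding N_def by (metis finite_lessThan lessThan_iff member_le_sum trans_le_add2 zero_le)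
  have g2: "nonvanishing n (?clear N g)"
    by (rule nonvanishing_sact_cleared[OF g q n Ng]) (simp add: N_def)
  show ?thesis unfolding rat_end_iff
  proof (intro exI conjI allI impI)
    show "nonvanishing n (?clear N g)" by (rule g2)
    fix k assume "k < m"
    then show "poly_fun n (?clear N (f k))" "Vector_Spaces.linear sc sc (A k)" using N0[OF _ NN] fA by auto
  next
    fix t assume t: "torus n t \<and> ?clear N g t \<noteq> 0"
    then have tp: "t (inverted_coord n j) ^ N \<noteq> 0" and gs: "g (sact n q j t) \<noteq> 0" by auto
    have "F (sact n q j t) = (\<lambda>v. \<Sum>k<m. sc (f k (sact n q j t) / g (sact n q j t)) (A k v))"
      using Fe torus_sact[OF q] t gs by blast
    also have "\<dots> = (\<lambda>v. \<Sum>k<m. sc (?clear N (f k) t / ?clear N g t) (A k v))"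
      by (simp only: mult_divide_mult_cancel_left[OF tp])
    finally show "F (sact n q j t) = (\<lambda>v. \<Sum>k<m. sc (?clear N (f k) t / ?clear N g t) (A k v))" .
  qed
qed

definition deg1 :: "(complex \<Rightarrow> 'v::ab_group_add \<Rightarrow> 'v) \<Rightarrow> complex \<Rightarrow> complex \<Rightarrow> ('v \<Rightarrow> 'v) \<Rightarrow> 'v \<Rightarrow> 'v" where
  "deg1 sc a b T v = sc a v + sc b (T v)"

locale quadratic_op =
  fixes sc :: "complex \<Rightarrow> 'v::ab_group_add \<Rightarrow> 'v" and T :: "'v \<Rightarrow> 'v" and c :: complex
  assumes vs: "vector_space sc" and linear: "Vector_Spaces.linear sc sc T"
    and quadratic: "\<And>v. T (T v) = sc c (T v) + v"
begin

interpretation vector_space sc by (rule vs)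

lemma add: "T (x + y) = T x + T y" by (rule lin_add[OF linear])
lemma scale: "T (sc r x) = sc r (T x)" by (rule lin_scale[OF linear])

lemma deg1_scale: "deg1 sc a b T (sc s v) = sc s (deg1 sc a b T v)"
  unfolding deg1_def by (simp add: scale scale_right_distrib mult.commute)

lemma deg1_deg1:
  "deg1 sc a b T (deg1 sc a' b' T v) = deg1 sc (a*a' + b*b') (a*b' + b*a' + b*b'*c) T v"
  unfolding deg1_def by (simp add: add scale quadratic scale_right_distrib scale_left_distrib algebra_simps)

lemma scaled_deg1_eq: "(\<lambda>v. sc s (deg1 sc a b T v)) = (\<lambda>v. sc (s * a) v + sc (s * b) (T v))"
  unfolding deg1_def by (simp add: scale_right_distrib)

lemma scaled_deg1_inverse:
  assumes "s * s' * (a*a' + b*b') = 1" and "s * s' * (a*b' + b*a' + b*b'*c) = 0"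
  shows "(\<lambda>v. sc s (deg1 sc a b T v)) \<circ> (\<lambda>v. sc s' (deg1 sc a' b' T v)) = id"
proof
  fix v
  have "((\<lambda>v. sc s (deg1 sc a b T v)) \<circ> (\<lambda>v. sc s' (deg1 sc a' b' T v))) v
     = sc (s * s') (deg1 sc (a*a' + b*b') (a*b' + b*a' + b*b'*c) T v)"
    by (simp add: deg1_scale deg1_deg1 mult.commute)
  also have "\<dots> = v" unfolding deg1_def using assms by (simp add: scale_right_distrib)
  finally show "((\<lambda>v. sc s (deg1 sc a b T v)) \<circ> (\<lambda>v. sc s' (deg1 sc a' b' T v))) v = id v" by simp
qed

end

definition K_op :: "(complex \<Rightarrow> 'v::ab_group_add \<Rightarrow> 'v) \<Rightarrow> ('v \<Rightarrow> 'v) \<Rightarrow> complex \<Rightarrow> complex \<Rightarrow> complex \<Rightarrow> 'v \<Rightarrow> 'v" where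
  "K_op sc T \<kappa> \<upsilon> x = (\<lambda>v. sc (inverse (inverse \<kappa> * (1 - \<kappa> * \<upsilon> * x) * (1 + \<kappa> * inverse \<upsilon> * x)))
     (deg1 sc ((inverse \<upsilon> - \<upsilon>) * x - (\<kappa> - inverse \<kappa>)) (1 - x\<^sup>2) T v))"

definition R_op :: "(complex \<Rightarrow> 'v::ab_group_add \<Rightarrow> 'v) \<Rightarrow> ('v \<Rightarrow> 'v) \<Rightarrow> complex \<Rightarrow> complex \<Rightarrow> 'v \<Rightarrow> 'v" where
  "R_op sc T \<kappa> x = (\<lambda>v. sc (inverse (inverse \<kappa> * (1 - \<kappa>\<^sup>2 * x))) (deg1 sc (- (\<kappa> - inverse \<kappa>)) (1 - x) T v))"

locale hecke_op = quadratic_op sc T "\<kappa> - inverse \<kappa>" for sc T \<kappa> +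
  assumes nonzero: "\<kappa> \<noteq> 0"
begin

lemma K_op_inverse:
  assumes u: "\<upsilon> \<noteq> 0" and x: "x \<noteq> 0"
    and poles: "(1 - \<kappa> * \<upsilon> * x) * (1 + \<kappa> * inverse \<upsilon> * x) \<noteq> 0" "(x - \<kappa> * \<upsilon>) * (x + \<kappa> * inverse \<upsilon>) \<noteq> 0"
  shows "K_op sc T \<kappa> \<upsilon> x \<circ> K_op sc T \<kappa> \<upsilon> (1 / x) = id"
  unfolding K_op_def
proof (rule scaled_deg1_inverse)
  define D where "D y = inverse \<kappa> * (1 - \<kappa> * \<upsilon> * y) * (1 + \<kappa> * inverse \<upsilon> * y)" for y
  have "D (1 / x) = inverse \<kappa> * (x - \<kappa> * \<upsilon>) * (x + \<kappa> * inverse \<upsilon>) / x\<^sup>2"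
    using x u by (simp add: D_def field_simps power2_eq_square)
  then have D: "D x \<noteq> 0" "D (1 / x) \<noteq> 0" using poles nonzero x by (auto simp: D_def)
  have "((inverse \<upsilon> - \<upsilon>) * x - (\<kappa> - inverse \<kappa>)) * ((inverse \<upsilon> - \<upsilon>) * (1 / x) - (\<kappa> - inverse \<kappa>))
        + (1 - x\<^sup>2) * (1 - (1 / x)\<^sup>2) = D x * D (1 / x)"
    unfolding D_def using nonzero u x by (simp add: field_simps power2_eq_square; simp add: algebra_simps)
  then show "inverse (D x) * inverse (D (1 / x)) *
      (((inverse \<upsilon> - \<upsilon>) * x - (\<kappa> - inverse \<kappa>)) * ((inverse \<upsilon> - \<upsilon>) * (1 / x) - (\<kappa> - inverse \<kappa>))
        + (1 - x\<^sup>2) * (1 - (1 / x)\<^sup>2)) = 1"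
    using D by (simp add: field_simps)
  have "((inverse \<upsilon> - \<upsilon>) * x - (\<kappa> - inverse \<kappa>)) * (1 - (1 / x)\<^sup>2)
        + (1 - x\<^sup>2) * ((inverse \<upsilon> - \<upsilon>) * (1 / x) - (\<kappa> - inverse \<kappa>))
        + (1 - x\<^sup>2) * (1 - (1 / x)\<^sup>2) * (\<kappa> - inverse \<kappa>) = 0"
    using nonzero u x by (simp add: field_simps power2_eq_square; simp add: algebra_simps)
  then show "inverse (D x) * inverse (D (1 / x)) *
      (((inverse \<upsilon> - \<upsilon>) * x - (\<kappa> - inverse \<kappa>)) * (1 - (1 / x)\<^sup>2)
        + (1 - x\<^sup>2) * ((inverse \<upsilon> - \<upsilon>) * (1 / x) - (\<kappa> - inverse \<kappa>))
        + (1 - x\<^sup>2) * (1 - (1 / x)\<^sup>2) * (\<kappa> - inverse \<kappa>)) = 0"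
    by simp
qed

lemma R_op_inverse:
  assumes x: "x \<noteq> 0" and poles: "1 - \<kappa>\<^sup>2 * x \<noteq> 0" "x - \<kappa>\<^sup>2 \<noteq> 0"
  shows "R_op sc T \<kappa> x \<circ> R_op sc T \<kappa> (1 / x) = id"
  unfolding R_op_def
proof (rule scaled_deg1_inverse)
  define D where "D y = inverse \<kappa> * (1 - \<kappa>\<^sup>2 * y)" for y
  have "D (1 / x) = inverse \<kappa> * (x - \<kappa>\<^sup>2) / x" using x by (simp add: D_def field_simps)
  then have D: "D x \<noteq> 0" "D (1 / x) \<noteq> 0" using poles nonzero x by (auto simp: D_def)
  have "(- (\<kappa> - inverse \<kappa>)) * (- (\<kappa> - inverse \<kappa>)) + (1 - x) * (1 - 1 / x) = D x * D (1 / x)"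
    unfolding D_def using nonzero x by (simp add: field_simps power2_eq_square; simp add: algebra_simps)
  then show "inverse (D x) * inverse (D (1 / x)) *
      ((- (\<kappa> - inverse \<kappa>)) * (- (\<kappa> - inverse \<kappa>)) + (1 - x) * (1 - 1 / x)) = 1"
    using D by (simp add: field_simps)
  have "(- (\<kappa> - inverse \<kappa>)) * (1 - 1 / x) + (1 - x) * (- (\<kappa> - inverse \<kappa>))
        + (1 - x) * (1 - 1 / x) * (\<kappa> - inverse \<kappa>) = 0"
    using nonzero x by (simp add: field_simps power2_eq_square; simp add: algebra_simps)
  then show "inverse (D x) * inverse (D (1 / x)) *
      ((- (\<kappa> - inverse \<kappa>)) * (1 - 1 / x) + (1 - x) * (- (\<kappa> - inverse \<kappa>))
        + (1 - x) * (1 - 1 / x) * (\<kappa> - inverse \<kappa>)) = 0"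
    by simp
qed

end

locale quadratic_pair = A: quadratic_op sc A cA + B: quadratic_op sc B cB
  for sc :: "complex \<Rightarrow> 'v::ab_group_add \<Rightarrow> 'v" and A cA B cB
begin

lemma scaled_deg1_commute:
  assumes AB: "\<And>v. A (B v) = B (A v)"
  shows "(\<lambda>v. sc s (deg1 sc a b A v)) \<circ> (\<lambda>v. sc s' (deg1 sc a' b' B v))
       = (\<lambda>v. sc s' (deg1 sc a' b' B v)) \<circ> (\<lambda>v. sc s (deg1 sc a b A v))"
proof -
  interpret vector_space sc by (rule A.vs)
  show ?thesis
    unfolding deg1_def by (auto simp: A.add A.scale B.add B.scale AB scale_right_distrib algebra_simps)
qed

end

text \<open>Under the quadratic relations and the braid relation of length four, every word in \<open>A\<close>
  and \<open>B\<close> reduces to a combination of the eight reduced words of the dihedral group of order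
  eight. \<open>dihedral8_comb\<close> is the combination with coefficient vector \<open>c\<close>, and left
  multiplication by \<open>a + b A\<close> or \<open>a + b B\<close> acts on \<open>c\<close> as \<open>dihedral8_mult_A\<close>, \<open>dihedral8_mult_B\<close>.\<close>

definition dihedral8_comb :: "(complex \<Rightarrow> 'v::ab_group_add \<Rightarrow> 'v) \<Rightarrow> ('v \<Rightarrow> 'v) \<Rightarrow> ('v \<Rightarrow> 'v) \<Rightarrow> (nat \<Rightarrow> complex) \<Rightarrow> 'v \<Rightarrow> 'v" where
  "dihedral8_comb sc A B c v = sc (c 0) v + sc (c 1) (A v) + sc (c 2) (B v) + sc (c 3) (A (B v)) + sc (c 4) (B (A v))
     + sc (c 5) (A (B (A v))) + sc (c 6) (B (A (B v))) + sc (c 7) (A (B (A (B v))))"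

definition dihedral8_mult_A :: "complex \<Rightarrow> complex \<Rightarrow> complex \<Rightarrow> (nat \<Rightarrow> complex) \<Rightarrow> nat \<Rightarrow> complex" where
  "dihedral8_mult_A cA a b c i = a * c i + b * ([c 1, c 0 + cA * c 1, c 3, c 2 + cA * c 3, c 5, c 4 + cA * c 5, c 7, c 6 + cA * c 7] ! i)"

definition dihedral8_mult_B :: "complex \<Rightarrow> complex \<Rightarrow> complex \<Rightarrow> (nat \<Rightarrow> complex) \<Rightarrow> nat \<Rightarrow> complex" where
  "dihedral8_mult_B cB a b c i = a * c i + b * ([c 2, c 4, c 0 + cB * c 2, c 6, c 1 + cB * c 4, c 7, c 3 + cB * c 6, c 5 + cB * c 7] ! i)"

locale quadratic_pair_braid4 = quadratic_pair +
  assumes braid4: "\<And>v. A (B (A (B v))) = B (A (B (A v)))"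
begin

interpretation vector_space sc by (rule A.vs)

lemma deg1_dihedral8_comb_A:
  "deg1 sc a b A (dihedral8_comb sc A B c v) = dihedral8_comb sc A B (dihedral8_mult_A cA a b c) v"
  unfolding deg1_def dihedral8_comb_def dihedral8_mult_A_def
  by (simp add: A.add A.scale A.quadratic braid4[symmetric] scale_right_distrib scale_left_distrib algebra_simps)

lemma deg1_dihedral8_comb_B:
  "deg1 sc a b B (dihedral8_comb sc A B c v) = dihedral8_comb sc A B (dihedral8_mult_B cB a b c) v"
  unfolding deg1_def dihedral8_comb_def dihedral8_mult_B_def
  by (simp add: B.add B.scale B.quadratic braid4 scale_right_distrib scale_left_distrib algebra_simps)

lemma dihedral8_comb_unit: "dihedral8_comb sc A B (\<lambda>i. if i = 0 then 1 else 0) v = v"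
  unfolding dihedral8_comb_def by simp

lemma dihedral8_comb_cong:
  "(\<And>i. i < 8 \<Longrightarrow> c i = d i) \<Longrightarrow> dihedral8_comb sc A B c v = dihedral8_comb sc A B d v"
  unfolding dihedral8_comb_def by (simp add: numeral_eq_Suc)

lemma deg1_reflection_equation:
  assumes x: "x \<noteq> 0"
  shows "deg1 sc (e*x - cA) (1 - x\<^sup>2) A (deg1 sc (-cB) (1 - x*y) B
           (deg1 sc (e*y - cA) (1 - y\<^sup>2) A (deg1 sc (-cB) (1 - y/x) B v)))
       = deg1 sc (-cB) (1 - y/x) B (deg1 sc (e*y - cA) (1 - y\<^sup>2) A
           (deg1 sc (-cB) (1 - x*y) B (deg1 sc (e*x - cA) (1 - x\<^sup>2) A v)))"
proof -
  define I where "I = (\<lambda>i::nat. if i = 0 then 1 else (0::complex))"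
  have v: "v = dihedral8_comb sc A B I v" unfolding I_def by (rule dihedral8_comb_unit[symmetric])
  show ?thesis
    apply (subst (1 2) v)
    apply (simp only: deg1_dihedral8_comb_A deg1_dihedral8_comb_B)
    apply (rule dihedral8_comb_cong)
    apply (auto simp: less_Suc_eq numeral_eq_Suc dihedral8_mult_A_def dihedral8_mult_B_def I_def)
    using x by (auto simp: field_simps power2_eq_square)
qed

end

definition dihedral6_comb :: "(complex \<Rightarrow> 'v::ab_group_add \<Rightarrow> 'v) \<Rightarrow> ('v \<Rightarrow> 'v) \<Rightarrow> ('v \<Rightarrow> 'v) \<Rightarrow> (nat \<Rightarrow> complex) \<Rightarrow> 'v \<Rightarrow> 'v" where
  "dihedral6_comb sc A B c v = sc (c 0) v + sc (c 1) (A v) + sc (c 2) (B v) + sc (c 3) (A (B v)) + sc (c 4) (B (A v))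
     + sc (c 5) (A (B (A v)))"

definition dihedral6_mult_A :: "complex \<Rightarrow> complex \<Rightarrow> complex \<Rightarrow> (nat \<Rightarrow> complex) \<Rightarrow> nat \<Rightarrow> complex" where
  "dihedral6_mult_A cA a b c i = a * c i + b * ([c 1, c 0 + cA * c 1, c 3, c 2 + cA * c 3, c 5, c 4 + cA * c 5] ! i)"

definition dihedral6_mult_B :: "complex \<Rightarrow> complex \<Rightarrow> complex \<Rightarrow> (nat \<Rightarrow> complex) \<Rightarrow> nat \<Rightarrow> complex" where
  "dihedral6_mult_B cB a b c i = a * c i + b * ([c 2, c 4, c 0 + cB * c 2, c 5, c 1 + cB * c 4, c 3 + cB * c 5] ! i)"

locale quadratic_pair_braid3 = quadratic_pair +
  assumes braid3: "\<And>v. A (B (A v)) = B (A (B v))"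
begin

interpretation vector_space sc by (rule A.vs)

lemma deg1_dihedral6_comb_A:
  "deg1 sc a b A (dihedral6_comb sc A B c v) = dihedral6_comb sc A B (dihedral6_mult_A cA a b c) v"
  unfolding deg1_def dihedral6_comb_def dihedral6_mult_A_def
  by (simp add: A.add A.scale A.quadratic scale_right_distrib scale_left_distrib algebra_simps)

lemma B_longest_word: "B (A (B (A v))) = sc cB (A (B (A v))) + A (B v)"
proof -
  have "B (A (B (A v))) = B (B (A (B v)))" by (simp add: braid3)
  also have "\<dots> = sc cB (B (A (B v))) + A (B v)" by (rule B.quadratic)
  finally show ?thesis by (simp add: braid3)
qed

lemma deg1_dihedral6_comb_B:
  "deg1 sc a b B (dihedral6_comb sc A B c v) = dihedral6_comb sc A B (dihedral6_mult_B cB a b c) v"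
  unfolding deg1_def dihedral6_comb_def dihedral6_mult_B_def
  by (simp only: B.add B.scale B_longest_word)
    (simp add: B.add B.scale B.quadratic braid3[symmetric] scale_right_distrib scale_left_distrib algebra_simps)

lemma dihedral6_comb_unit: "dihedral6_comb sc A B (\<lambda>i. if i = 0 then 1 else 0) v = v"
  unfolding dihedral6_comb_def by simp

lemma dihedral6_comb_cong:
  "(\<And>i. i < 6 \<Longrightarrow> c i = d i) \<Longrightarrow> dihedral6_comb sc A B c v = dihedral6_comb sc A B d v"
  unfolding dihedral6_comb_def by (simp add: numeral_eq_Suc)

lemma deg1_yang_baxter_equation:
  assumes "cB = cA"
  shows "deg1 sc (-cA) (1 - x) A (deg1 sc (-cA) (1 - x*y) B (deg1 sc (-cA) (1 - y) A v))
       = deg1 sc (-cA) (1 - y) B (deg1 sc (-cA) (1 - x*y) A (deg1 sc (-cA) (1 - x) B v))"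
proof -
  define I where "I = (\<lambda>i::nat. if i = 0 then 1 else (0::complex))"
  have v: "v = dihedral6_comb sc A B I v" unfolding I_def by (rule dihedral6_comb_unit[symmetric])
  show ?thesis
    apply (subst (1 2) v)
    apply (simp only: deg1_dihedral6_comb_A deg1_dihedral6_comb_B)
    apply (rule dihedral6_comb_cong)
    apply (auto simp: less_Suc_eq numeral_eq_Suc dihedral6_mult_A_def dihedral6_mult_B_def I_def assms)
    by (auto simp: algebra_simps)
qed

end

lemma nonvanishing_coord_affine:
  assumes m: "m \<in> {1..n}" and a: "a \<noteq> 0" and f: "\<And>t. f t = a * t m + b"
  shows "nonvanishing n f"
proof (rule nonvanishing_on_axis[of n f "{- b / a}" m])
  show "poly_fun n f" unfolding f by (intro poly_fun_add poly_fun_mult poly_fun_const poly_fun_coord m)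
  show "f (\<lambda>i. if i = m then z else 1) \<noteq> 0" if "z \<notin> {- b / a}" for z
    using that a unfolding f by (auto simp: eq_neg_iff_add_eq_0 field_simps)
qed simp

lemma nonvanishing_coord_linear2:
  assumes m: "m \<in> {1..n}" and i: "i \<in> {1..n}" "i \<noteq> m" and a: "a \<noteq> 0"
    and f: "\<And>t. f t = a * t m + b * t i"
  shows "nonvanishing n f"
proof (rule nonvanishing_on_axis[of n f "{- b / a}" m])
  show "poly_fun n f" unfolding f by (intro poly_fun_add poly_fun_mult poly_fun_const poly_fun_coord m i)
  show "f (\<lambda>i. if i = m then z else 1) \<noteq> 0" if "z \<notin> {- b / a}" for z
    using that a i unfolding f by (auto simp: eq_neg_iff_add_eq_0 field_simps)
qed simp

lemma rat_end_id:
  assumes "vector_space sc"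
  shows "rat_end sc n (\<lambda>t. id)"
  unfolding rat_end_iff
proof (intro exI conjI allI impI)
  interpret vector_space sc by fact
  show "nonvanishing n (\<lambda>t. 1)" by (rule nonvanishing_const) simp
  fix k :: nat assume "k < 1"
  show "poly_fun n (\<lambda>t. 1)" by (rule poly_fun_const)
  show "Vector_Spaces.linear sc sc (\<lambda>v. v)" by (rule lin_id) fact
next
  interpret vector_space sc by fact
  fix t show "id = (\<lambda>v. \<Sum>k<(1::nat). sc (1 / 1) v)" by (simp add: fun_eq_iff)
qed

lemma rat_end_affine:
  assumes vs: "vector_space sc" and T: "Vector_Spaces.linear sc sc T"
    and g: "nonvanishing n g" and f0: "poly_fun n f0" and f1: "poly_fun n f1"
    and F: "\<And>t. torus n t \<Longrightarrow> g t \<noteq> 0 \<Longrightarrow> F t = (\<lambda>v. sc (f0 t / g t) v + sc (f1 t / g t) (T v))"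
  shows "rat_end sc n F"
  unfolding rat_end_iff
proof (intro exI conjI allI impI)
  show "nonvanishing n g" by (rule g)
  fix k :: nat assume "k < 2"
  show "poly_fun n ((\<lambda>k. if k = 0 then f0 else f1) k)" using f0 f1 by simp
  show "Vector_Spaces.linear sc sc ((\<lambda>k. if k = 0 then (\<lambda>v. v) else T) k)" using lin_id[OF vs] T by simp
next
  fix t assume "torus n t \<and> g t \<noteq> 0"
  then show "F t = (\<lambda>v. \<Sum>k<(2::nat). sc ((\<lambda>k. if k = 0 then f0 else f1) k t / g t)
                                      ((\<lambda>k. if k = 0 then (\<lambda>v. v) else T) k v))"
    using F by (simp add: numeral_2_eq_2)
qed

context hecke_op
begin

lemma rat_end_K_op:
  assumes u: "\<upsilon> \<noteq> 0" and \<alpha>: "poly_fun n \<alpha>" and \<beta>: "poly_fun n \<beta>" "\<And>t. torus n t \<Longrightarrow> \<beta> t \<noteq> 0"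
    and poles: "nonvanishing n (\<lambda>t. \<beta> t - \<kappa> * \<upsilon> * \<alpha> t)" "nonvanishing n (\<lambda>t. \<beta> t + \<kappa> * inverse \<upsilon> * \<alpha> t)"
  shows "rat_end sc n (\<lambda>t. K_op sc T \<kappa> \<upsilon> (\<alpha> t / \<beta> t))"
proof (rule rat_end_affine[OF vs linear])
  let ?g = "\<lambda>t. inverse \<kappa> * ((\<beta> t - \<kappa> * \<upsilon> * \<alpha> t) * (\<beta> t + \<kappa> * inverse \<upsilon> * \<alpha> t))"
  let ?f0 = "\<lambda>t. (inverse \<upsilon> - \<upsilon>) * \<alpha> t * \<beta> t - (\<kappa> - inverse \<kappa>) * \<beta> t ^ 2"
  let ?f1 = "\<lambda>t. \<beta> t ^ 2 - \<alpha> t ^ 2"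
  show "nonvanishing n ?g"
    using nonzero by (intro nonvanishing_mult nonvanishing_const poles) simp
  show "poly_fun n ?f0" by (intro poly_fun_diff poly_fun_mult poly_fun_power poly_fun_const \<alpha> \<beta>)
  show "poly_fun n ?f1" by (intro poly_fun_diff poly_fun_power \<alpha> \<beta>)
  fix t assume t: "torus n t" and g: "?g t \<noteq> 0"
  define x where "x = \<alpha> t / \<beta> t"
  have b: "\<beta> t \<noteq> 0" by (rule \<beta>(2)[OF t])
  have s: "inverse (inverse \<kappa> * (1 - \<kappa> * \<upsilon> * x) * (1 + \<kappa> * inverse \<upsilon> * x)) = \<beta> t ^ 2 / ?g t"
    using b u nonzero by (simp add: x_def field_simps power2_eq_square)
  have "inverse (inverse \<kappa> * (1 - \<kappa> * \<upsilon> * x) * (1 + \<kappa> * inverse \<upsilon> * x))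
      * ((inverse \<upsilon> - \<upsilon>) * x - (\<kappa> - inverse \<kappa>)) = ?f0 t / ?g t"
    "inverse (inverse \<kappa> * (1 - \<kappa> * \<upsilon> * x) * (1 + \<kappa> * inverse \<upsilon> * x)) * (1 - x\<^sup>2) = ?f1 t / ?g t"
  proof -
    have "\<beta> t ^ 2 * ((inverse \<upsilon> - \<upsilon>) * x - (\<kappa> - inverse \<kappa>)) = ?f0 t" "\<beta> t ^ 2 * (1 - x\<^sup>2) = ?f1 t"
      using b by (simp_all add: x_def field_simps power2_eq_square)
    then show "inverse (inverse \<kappa> * (1 - \<kappa> * \<upsilon> * x) * (1 + \<kappa> * inverse \<upsilon> * x))
      * ((inverse \<upsilon> - \<upsilon>) * x - (\<kappa> - inverse \<kappa>)) = ?f0 t / ?g t"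
      "inverse (inverse \<kappa> * (1 - \<kappa> * \<upsilon> * x) * (1 + \<kappa> * inverse \<upsilon> * x)) * (1 - x\<^sup>2) = ?f1 t / ?g t"
      unfolding s times_divide_eq_left by simp_all
  qed
  then show "K_op sc T \<kappa> \<upsilon> (\<alpha> t / \<beta> t) = (\<lambda>v. sc (?f0 t / ?g t) v + sc (?f1 t / ?g t) (T v))"
    unfolding K_op_def scaled_deg1_eq x_def by simp
qed

lemma rat_end_R_op:
  assumes \<alpha>: "poly_fun n \<alpha>" and \<beta>: "poly_fun n \<beta>" "\<And>t. torus n t \<Longrightarrow> \<beta> t \<noteq> 0"
    and pole: "nonvanishing n (\<lambda>t. \<beta> t - \<kappa>\<^sup>2 * \<alpha> t)"
  shows "rat_end sc n (\<lambda>t. R_op sc T \<kappa> (\<alpha> t / \<beta> t))"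
proof (rule rat_end_affine[OF vs linear])
  let ?g = "\<lambda>t. inverse \<kappa> * (\<beta> t - \<kappa>\<^sup>2 * \<alpha> t)"
  let ?f0 = "\<lambda>t. - (\<kappa> - inverse \<kappa>) * \<beta> t"
  let ?f1 = "\<lambda>t. \<beta> t - \<alpha> t"
  show "nonvanishing n ?g" using nonzero by (intro nonvanishing_mult nonvanishing_const pole) simp
  show "poly_fun n ?f0" by (intro poly_fun_mult poly_fun_const \<beta>)
  show "poly_fun n ?f1" by (intro poly_fun_diff \<alpha> \<beta>)
  fix t assume t: "torus n t" and g: "?g t \<noteq> 0"
  define x where "x = \<alpha> t / \<beta> t"
  have b: "\<beta> t \<noteq> 0" by (rule \<beta>(2)[OF t])
  have s: "inverse (inverse \<kappa> * (1 - \<kappa>\<^sup>2 * x)) = \<beta> t / ?g t"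
    using b nonzero by (simp add: x_def field_simps)
  have "inverse (inverse \<kappa> * (1 - \<kappa>\<^sup>2 * x)) * (- (\<kappa> - inverse \<kappa>)) = ?f0 t / ?g t"
    "inverse (inverse \<kappa> * (1 - \<kappa>\<^sup>2 * x)) * (1 - x) = ?f1 t / ?g t"
  proof -
    have "\<beta> t * (- (\<kappa> - inverse \<kappa>)) = ?f0 t" "\<beta> t * (1 - x) = ?f1 t"
      using b by (simp_all add: x_def field_simps)
    then show "inverse (inverse \<kappa> * (1 - \<kappa>\<^sup>2 * x)) * (- (\<kappa> - inverse \<kappa>)) = ?f0 t / ?g t"
      "inverse (inverse \<kappa> * (1 - \<kappa>\<^sup>2 * x)) * (1 - x) = ?f1 t / ?g t"
      unfolding s times_divide_eq_left by simp_all
  qed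
  then show "R_op sc T \<kappa> (\<alpha> t / \<beta> t) = (\<lambda>v. sc (?f0 t / ?g t) v + sc (?f1 t / ?g t) (T v))"
    unfolding R_op_def scaled_deg1_eq x_def by simp
qed

lemma generic_eq_K_op_inverse:
  assumes u: "\<upsilon> \<noteq> 0" and nonzero_on_torus: "\<And>t. torus n t \<Longrightarrow> \<alpha> t \<noteq> 0 \<and> \<beta> t \<noteq> 0"
    and poles: "nonvanishing n (\<lambda>t. \<beta> t - \<kappa> * \<upsilon> * \<alpha> t)" "nonvanishing n (\<lambda>t. \<beta> t + \<kappa> * inverse \<upsilon> * \<alpha> t)"
      "nonvanishing n (\<lambda>t. \<alpha> t - \<kappa> * \<upsilon> * \<beta> t)" "nonvanishing n (\<lambda>t. \<alpha> t + \<kappa> * inverse \<upsilon> * \<beta> t)"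
  shows "generic_eq n (\<lambda>t. K_op sc T \<kappa> \<upsilon> (\<alpha> t / \<beta> t) \<circ> K_op sc T \<kappa> \<upsilon> (\<beta> t / \<alpha> t)) (\<lambda>t. id)"
  unfolding generic_eq_iff
proof (intro exI conjI allI impI)
  let ?g = "\<lambda>t. (\<beta> t - \<kappa> * \<upsilon> * \<alpha> t) * (\<beta> t + \<kappa> * inverse \<upsilon> * \<alpha> t)
              * ((\<alpha> t - \<kappa> * \<upsilon> * \<beta> t) * (\<alpha> t + \<kappa> * inverse \<upsilon> * \<beta> t))"
  show "nonvanishing n ?g" by (intro nonvanishing_mult poles)
  fix t assume "torus n t \<and> ?g t \<noteq> 0"
  then have ab: "\<alpha> t \<noteq> 0" "\<beta> t \<noteq> 0" and g: "?g t \<noteq> 0" using nonzero_on_torus by auto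
  define x where "x = \<alpha> t / \<beta> t"
  have x: "x \<noteq> 0" "\<beta> t / \<alpha> t = 1 / x" using ab by (auto simp: x_def)
  have "(1 - \<kappa> * \<upsilon> * x) * (1 + \<kappa> * inverse \<upsilon> * x)
      = (\<beta> t - \<kappa> * \<upsilon> * \<alpha> t) * (\<beta> t + \<kappa> * inverse \<upsilon> * \<alpha> t) / \<beta> t ^ 2"
    "(x - \<kappa> * \<upsilon>) * (x + \<kappa> * inverse \<upsilon>)
      = (\<alpha> t - \<kappa> * \<upsilon> * \<beta> t) * (\<alpha> t + \<kappa> * inverse \<upsilon> * \<beta> t) / \<beta> t ^ 2"
    using ab u by (simp_all add: x_def field_simps power2_eq_square)
  then show "K_op sc T \<kappa> \<upsilon> (\<alpha> t / \<beta> t) \<circ> K_op sc T \<kappa> \<upsilon> (\<beta> t / \<alpha> t) = id"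
    unfolding x_def[symmetric] x(2) using g ab by (intro K_op_inverse u x(1)) auto
qed

lemma generic_eq_R_op_inverse:
  assumes nonzero_on_torus: "\<And>t. torus n t \<Longrightarrow> \<alpha> t \<noteq> 0 \<and> \<beta> t \<noteq> 0"
    and poles: "nonvanishing n (\<lambda>t. \<beta> t - \<kappa>\<^sup>2 * \<alpha> t)" "nonvanishing n (\<lambda>t. \<alpha> t - \<kappa>\<^sup>2 * \<beta> t)"
  shows "generic_eq n (\<lambda>t. R_op sc T \<kappa> (\<alpha> t / \<beta> t) \<circ> R_op sc T \<kappa> (\<beta> t / \<alpha> t)) (\<lambda>t. id)"
  unfolding generic_eq_iff
proof (intro exI conjI allI impI)
  let ?g = "\<lambda>t. (\<beta> t - \<kappa>\<^sup>2 * \<alpha> t) * (\<alpha> t - \<kappa>\<^sup>2 * \<beta> t)"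
  show "nonvanishing n ?g" by (intro nonvanishing_mult poles)
  fix t assume "torus n t \<and> ?g t \<noteq> 0"
  then have ab: "\<alpha> t \<noteq> 0" "\<beta> t \<noteq> 0" and g: "?g t \<noteq> 0" using nonzero_on_torus by auto
  define x where "x = \<alpha> t / \<beta> t"
  have x: "x \<noteq> 0" "\<beta> t / \<alpha> t = 1 / x" using ab by (auto simp: x_def)
  have "1 - \<kappa>\<^sup>2 * x = (\<beta> t - \<kappa>\<^sup>2 * \<alpha> t) / \<beta> t" "x - \<kappa>\<^sup>2 = (\<alpha> t - \<kappa>\<^sup>2 * \<beta> t) / \<beta> t"
    using ab by (simp_all add: x_def field_simps)
  then show "R_op sc T \<kappa> (\<alpha> t / \<beta> t) \<circ> R_op sc T \<kappa> (\<beta> t / \<alpha> t) = id"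
    unfolding x_def[symmetric] x(2) using g ab by (intro R_op_inverse x(1)) auto
qed

end

lemma (in quadratic_pair_braid4) reflection_equation:
  assumes cA: "cA = \<kappa>A - inverse \<kappa>A" and cB: "cB = \<kappa>B - inverse \<kappa>B" and x: "x \<noteq> 0"
  shows "K_op sc A \<kappa>A \<upsilon> x (R_op sc B \<kappa>B (x*y) (K_op sc A \<kappa>A \<upsilon> y (R_op sc B \<kappa>B (y/x) v)))
       = R_op sc B \<kappa>B (y/x) (K_op sc A \<kappa>A \<upsilon> y (R_op sc B \<kappa>B (x*y) (K_op sc A \<kappa>A \<upsilon> x v)))"
proof -
  interpret vector_space sc by (rule A.vs)
  show ?thesis
    unfolding K_op_def R_op_def cA[symmetric] cB[symmetric]
    by (simp only: A.deg1_scale B.deg1_scale scale_scale deg1_reflection_equation[OF x]) (simp add: mult_ac)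
qed

lemma (in quadratic_pair_braid3) yang_baxter_equation:
  assumes cA: "cA = \<kappa> - inverse \<kappa>" and cB: "cB = \<kappa> - inverse \<kappa>"
  shows "R_op sc A \<kappa> x (R_op sc B \<kappa> (x*y) (R_op sc A \<kappa> y v))
       = R_op sc B \<kappa> y (R_op sc A \<kappa> (x*y) (R_op sc B \<kappa> x v))"
proof -
  interpret vector_space sc by (rule A.vs)
  have "cB = cA" using cA cB by simp
  show ?thesis
    unfolding R_op_def cA[symmetric]
    by (simp only: A.deg1_scale B.deg1_scale scale_scale deg1_yang_baxter_equation[OF \<open>cB = cA\<close>])
      (simp add: mult_ac)
qed

locale hecke_rep =
  fixes sc :: "complex \<Rightarrow> 'v::ab_group_add \<Rightarrow> 'v" and n :: nat and k0 k kn q qh u0 un :: complex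
    and P :: "nat \<Rightarrow> 'v \<Rightarrow> 'v"
  assumes vs: "vector_space sc" and n2: "n \<ge> 2" and k0: "k0 \<noteq> 0" and kk: "k \<noteq> 0" and kn: "kn \<noteq> 0"
    and q: "q \<noteq> 0" and qh: "qh ^ 2 = q" and u0: "u0 \<noteq> 0" and un: "un \<noteq> 0"
    and rep: "is_rep sc n k0 k kn P"
begin

interpretation V: vector_space sc by (rule vs)

lemma hecke_op_P:
  assumes j: "j \<le> n"
  shows "hecke_op sc (P j) (kap n k0 k kn j)"
proof -
  define \<kappa> where "\<kappa> = kap n k0 k kn j"
  have \<kappa>: "\<kappa> \<noteq> 0" using k0 kk kn by (simp add: \<kappa>_def kap_def)
  have lin: "Vector_Spaces.linear sc sc (P j)" using rep j by (simp add: is_rep_def)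
  have quad: "P j (P j v) = sc (\<kappa> - inverse \<kappa>) (P j v) + v" for v
  proof -
    have "(\<lambda>v. P j v - sc \<kappa> v) \<circ> (\<lambda>v. P j v + sc (inverse \<kappa>) v) = (\<lambda>v. 0)"
      using rep j unfolding is_rep_def \<kappa>_def by blast
    from fun_cong[OF this, of v]
    have "P j (P j v) + sc (inverse \<kappa>) (P j v) - sc \<kappa> (P j v) - v = 0"
      using \<kappa> by (simp add: lin_add[OF lin] lin_scale[OF lin] V.scale_right_distrib algebra_simps)
    then show ?thesis by (simp add: V.scale_left_diff_distrib algebra_simps)
  qed
  show ?thesis
    unfolding \<kappa>_def[symmetric] hecke_op_def hecke_op_axioms_def quadratic_op_def using vs lin quad \<kappa> by blast
qed

lemma hecke_op_P0: "hecke_op sc (P 0) k0"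
  using hecke_op_P[of 0] by (simp add: kap_def)

lemma hecke_op_Pn: "hecke_op sc (P n) kn"
  using hecke_op_P[of n] n2 by (simp add: kap_def)

lemma hecke_op_Pi: "0 < i \<Longrightarrow> i < n \<Longrightarrow> hecke_op sc (P i) k"
  using hecke_op_P[of i] by (simp add: kap_def)

lemma quadratic_pair_P:
  "i \<le> n \<Longrightarrow> j \<le> n \<Longrightarrow> quadratic_pair sc (P i) (kap n k0 k kn i - inverse (kap n k0 k kn i))
     (P j) (kap n k0 k kn j - inverse (kap n k0 k kn j))"
  unfolding quadratic_pair_def using hecke_op_P hecke_op.axioms(1) by blast

lemma K0V_eq: "K0V sc n k0 k kn P u0 x = K_op sc (P 0) k0 u0 x"
  unfolding K0V_def K_op_def deg1_def Pinv_def
  by (simp add: kap_def V.scale_left_diff_distrib algebra_simps)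

lemma KnV_eq: "KnV sc n k0 k kn P un x = K_op sc (P n) kn un x"
  unfolding KnV_def K_op_def deg1_def Pinv_def using n2
  by (simp add: kap_def V.scale_left_diff_distrib algebra_simps)

lemma RV_eq: "0 < i \<Longrightarrow> i < n \<Longrightarrow> RV sc n k0 k kn P i x = R_op sc (P i) k x"
  unfolding RV_def R_op_def deg1_def Pinv_def
  by (simp add: kap_def V.scale_left_diff_distrib algebra_simps)

definition Cgen :: "nat \<Rightarrow> (nat \<Rightarrow> complex) \<Rightarrow> 'v \<Rightarrow> 'v" where
  "Cgen j t = (if j = 0 then K_op sc (P 0) k0 u0 (qh / t 1)
     else if j < n then R_op sc (P j) k (t j / t (Suc j))
     else if j = n then K_op sc (P n) kn un (t n) else id)"

primrec Cword :: "nat list \<Rightarrow> (nat \<Rightarrow> complex) \<Rightarrow> 'v \<Rightarrow> 'v" where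
  "Cword [] t = id"
| "Cword (j # w) t = Cgen j t \<circ> Cword w (sact n q j t)"

lemma Cword_Nil: "Cword [] = (\<lambda>t. id)"
  by (rule ext) simp

lemma Cword_Cons: "Cword (j # w) = (\<lambda>t. Cgen j t \<circ> Cword w (sact n q j t))"
  by (rule ext) simp

lemma Cword_append: "Cword (w @ w') t = Cword w t \<circ> Cword w' (wact n q (rev w) t)"
  by (induction w arbitrary: t) (auto simp: wact_def)

lemma wact_rev_cox_eq: "cox_eq n x y \<Longrightarrow> wact n q (rev x) = wact n q (rev y)"
proof (induction rule: cox_eq.induct)
  case (ctx x y u v)
  then show ?case by (simp add: wact_def)
next
  case (sq j)
  then show ?case using sact_sact[OF q] by (simp add: wact_def fun_eq_iff)
qed (use n2 q in \<open>auto simp: wact_def fun_eq_iff sact_def\<close>)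

lemma Cgen_scaled_deg1:
  assumes "j \<le> n"
  shows "\<exists>s a b. Cgen j t = (\<lambda>v. sc s (deg1 sc a b (P j) v))"
proof -
  consider "j = 0" | "0 < j \<and> j < n" | "j = n" using assms by linarith
  then show ?thesis using n2 unfolding Cgen_def K_op_def R_op_def by cases auto
qed

lemma Cword_commute:
  assumes j: "j \<le> n" and ij: "i + 1 < j"
  shows "Cword [i, j] t = Cword [j, i] t"
proof -
  have i: "i \<le> n" using j ij by simp
  have "P i \<circ> P j = P j \<circ> P i" using rep j ij unfolding is_rep_def by blast
  then have PiPj: "P i (P j v) = P j (P i v)" for v by (metis comp_apply)
  have other: "Cgen j (sact n q i t) = Cgen j t" "Cgen i (sact n q j t) = Cgen i t"
    using j ij n2 by (auto simp: Cgen_def sact_def)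
  obtain s a b where 1: "Cgen i t = (\<lambda>v. sc s (deg1 sc a b (P i) v))" using Cgen_scaled_deg1[OF i] by blast
  obtain s' a' b' where 2: "Cgen j t = (\<lambda>v. sc s' (deg1 sc a' b' (P j) v))" using Cgen_scaled_deg1[OF j] by blast
  show ?thesis
    using quadratic_pair.scaled_deg1_commute[OF quadratic_pair_P[OF i j] PiPj] by (simp add: other 1 2)
qed

lemma Cword_braid0:
  assumes t: "torus n t"
  shows "Cword [0, 1, 0, 1] t = Cword [1, 0, 1, 0] t"
proof -
  have t1: "t 1 \<noteq> 0" and t2: "t 2 \<noteq> 0" using t n2 unfolding torus_def by auto
  have qh0: "qh \<noteq> 0" using qh q by auto
  define x where "x = qh / t (Suc 0)"
  define y where "y = qh / t (Suc (Suc 0))"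
  have x0: "x \<noteq> 0" using qh0 t1 by (simp add: x_def)
  have e: "q / (t (Suc 0) * t (Suc (Suc 0))) = x * y" "q / (t (Suc (Suc 0)) * t (Suc 0)) = x * y"
    "t (Suc 0) / t (Suc (Suc 0)) = y / x"
    using qh qh0 t1 t2 by (simp_all add: x_def y_def field_simps power2_eq_square numeral_2_eq_2)
  have braid: "quadratic_pair_braid4 sc (P 0) (k0 - inverse k0) (P 1) (k - inverse k)"
    using quadratic_pair_P[of 0 1] n2 rep
    by (simp add: quadratic_pair_braid4_def quadratic_pair_braid4_axioms_def is_rep_def kap_def fun_eq_iff)
  have "Cword [0, 1, 0, 1] t = (\<lambda>v. K_op sc (P 0) k0 u0 x (R_op sc (P 1) k (x*y)
       (K_op sc (P 0) k0 u0 y (R_op sc (P 1) k (y/x) v))))"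
    "Cword [1, 0, 1, 0] t = (\<lambda>v. R_op sc (P 1) k (y/x) (K_op sc (P 0) k0 u0 y
       (R_op sc (P 1) k (x*y) (K_op sc (P 0) k0 u0 x v))))"
    using n2 q by (simp_all add: Cgen_def sact_def fun_eq_iff e x_def[symmetric] y_def[symmetric])
  then show ?thesis
    using quadratic_pair_braid4.reflection_equation[OF braid HOL.refl HOL.refl x0] by simp
qed

lemma Cword_braidn:
  assumes t: "torus n t"
  shows "Cword [n - 1, n, n - 1, n] t = Cword [n, n - 1, n, n - 1] t"
proof -
  define x where "x = t (n - Suc 0)"
  define y where "y = t n"
  have x0: "x \<noteq> 0" and y0: "y \<noteq> 0" using t n2 unfolding torus_def x_def y_def by auto
  have e: "y / inverse x = y * x" "x / inverse y = y * x" "inverse y / inverse x = x / y"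
    using x0 y0 by (auto simp: field_simps)
  have n1: "n - 1 \<noteq> 0" "n - 1 < n" "Suc (n - 1) = n" "n \<noteq> 0" "n - Suc 0 \<noteq> n" using n2 by auto
  have "quadratic_pair sc (P n) (kn - inverse kn) (P (n - 1)) (k - inverse k)"
    using quadratic_pair_P[of n "n - 1"] n1 by (simp add: kap_def)
  moreover have "P n (P (n - 1) (P n (P (n - 1) v))) = P (n - 1) (P n (P (n - 1) (P n v)))" for v
  proof -
    have "P (n - 1) \<circ> P n \<circ> P (n - 1) \<circ> P n = P n \<circ> P (n - 1) \<circ> P n \<circ> P (n - 1)"
      using rep unfolding is_rep_def by blast
    from fun_cong[OF this, of v] show ?thesis by simp
  qed
  ultimately have braid: "quadratic_pair_braid4 sc (P n) (kn - inverse kn) (P (n - 1)) (k - inverse k)"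
    unfolding quadratic_pair_braid4_def quadratic_pair_braid4_axioms_def by blast
  have "Cword [n - 1, n, n - 1, n] t = (\<lambda>v. R_op sc (P (n - 1)) k (x/y) (K_op sc (P n) kn un x
       (R_op sc (P (n - 1)) k (y*x) (K_op sc (P n) kn un y v))))"
    "Cword [n, n - 1, n, n - 1] t = (\<lambda>v. K_op sc (P n) kn un y (R_op sc (P (n - 1)) k (y*x)
       (K_op sc (P n) kn un x (R_op sc (P (n - 1)) k (x/y) v))))"
    using n1 by (simp_all add: Cgen_def sact_def fun_eq_iff x_def[symmetric] y_def[symmetric] e)
  then show ?thesis
    using quadratic_pair_braid4.reflection_equation[OF braid HOL.refl HOL.refl y0] by simp
qed

lemma Cword_braid3:
  assumes t: "torus n t" and i: "1 \<le> i" "i + 1 < n"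
  shows "Cword [i, i + 1, i] t = Cword [i + 1, i, i + 1] t"
proof -
  define x where "x = t i"
  define y where "y = t (Suc i)"
  define z where "z = t (Suc (Suc i))"
  have y0: "y \<noteq> 0" using t i unfolding torus_def y_def by auto
  have ii: "i \<noteq> 0" "i < n" "Suc i < n" using i by auto
  have "quadratic_pair sc (P i) (k - inverse k) (P (Suc i)) (k - inverse k)"
    using quadratic_pair_P[of i "Suc i"] ii by (simp add: kap_def)
  moreover have "P i (P (Suc i) (P i v)) = P (Suc i) (P i (P (Suc i) v))" for v
  proof -
    have "P i \<circ> P (i + 1) \<circ> P i = P (i + 1) \<circ> P i \<circ> P (i + 1)" using rep i unfolding is_rep_def by blast
    from fun_cong[OF this, of v] show ?thesis by simp
  qed
  ultimately have braid: "quadratic_pair_braid3 sc (P i) (k - inverse k) (P (Suc i)) (k - inverse k)"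
    unfolding quadratic_pair_braid3_def quadratic_pair_braid3_axioms_def by blast
  have "Cword [i, i + 1, i] t = (\<lambda>v. R_op sc (P i) k (x/y) (R_op sc (P (Suc i)) k (x/z)
       (R_op sc (P i) k (y/z) v)))"
    "Cword [i + 1, i, i + 1] t = (\<lambda>v. R_op sc (P (Suc i)) k (y/z) (R_op sc (P i) k (x/z)
       (R_op sc (P (Suc i)) k (x/y) v)))"
    using ii y0 by (simp_all add: Cgen_def sact_def fun_eq_iff x_def[symmetric] y_def[symmetric] z_def[symmetric])
  then show ?thesis
    using quadratic_pair_braid3.yang_baxter_equation[OF braid HOL.refl HOL.refl, of "x/y" "y/z"] y0 by simp
qed

lemma Cword_square_0: "generic_eq n (Cword [0, 0]) (Cword [])"
proof -
  have qh0: "qh \<noteq> 0" using qh q by auto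
  have one: "1 \<in> {1..n}" using n2 by simp
  have K: "generic_eq n (\<lambda>t. K_op sc (P 0) k0 u0 (qh / t 1) \<circ> K_op sc (P 0) k0 u0 (t 1 / qh)) (\<lambda>t. id)"
  proof (rule hecke_op.generic_eq_K_op_inverse[OF hecke_op_P0 u0])
    show "torus n t \<Longrightarrow> qh \<noteq> 0 \<and> t 1 \<noteq> 0" for t using qh0 one unfolding torus_def by blast
    show "nonvanishing n (\<lambda>t. t 1 - k0 * u0 * qh)"
      by (rule nonvanishing_coord_affine[OF one, of 1 _ "- (k0 * u0 * qh)"]) simp_all
    show "nonvanishing n (\<lambda>t. t 1 + k0 * inverse u0 * qh)"
      by (rule nonvanishing_coord_affine[OF one, of 1]) simp_all
    show "nonvanishing n (\<lambda>t. qh - k0 * u0 * t 1)"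
      by (rule nonvanishing_coord_affine[OF one, of "- (k0 * u0)" _ qh]) (use k0 u0 in simp_all)
    show "nonvanishing n (\<lambda>t. qh + k0 * inverse u0 * t 1)"
      by (rule nonvanishing_coord_affine[OF one, of "k0 * inverse u0" _ qh]) (use k0 u0 in simp_all)
  qed
  have "generic_eq n (Cword [0, 0]) (\<lambda>t. K_op sc (P 0) k0 u0 (qh / t 1) \<circ> K_op sc (P 0) k0 u0 (t 1 / qh))"
  proof (rule generic_eqI)
    fix t assume "torus n t"
    then have "t 1 \<noteq> 0" using one unfolding torus_def by blast
    then have "qh / (q / t 1) = t 1 / qh" using qh0 by (simp add: qh[symmetric] field_simps power2_eq_square)
    then show "Cword [0, 0] t = K_op sc (P 0) k0 u0 (qh / t 1) \<circ> K_op sc (P 0) k0 u0 (t 1 / qh)"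
      by (simp add: Cgen_def sact_def)
  qed
  then show ?thesis unfolding Cword_Nil by (rule generic_eq_trans[OF _ K])
qed

lemma Cword_square_mid:
  assumes j: "0 < j" "j < n"
  shows "generic_eq n (Cword [j, j]) (Cword [])"
proof -
  have jj: "j \<in> {1..n}" "Suc j \<in> {1..n}" "Suc j \<noteq> j" using j by auto
  have R: "generic_eq n (\<lambda>t. R_op sc (P j) k (t j / t (Suc j)) \<circ> R_op sc (P j) k (t (Suc j) / t j)) (\<lambda>t. id)"
  proof (rule hecke_op.generic_eq_R_op_inverse[OF hecke_op_Pi[OF j]])
    show "torus n t \<Longrightarrow> t j \<noteq> 0 \<and> t (Suc j) \<noteq> 0" for t using jj unfolding torus_def by blast
    show "nonvanishing n (\<lambda>t. t (Suc j) - k\<^sup>2 * t j)"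
      by (rule nonvanishing_coord_linear2[OF jj(2) jj(1) not_sym[OF jj(3)], of 1 _ "- k\<^sup>2"]) simp_all
    show "nonvanishing n (\<lambda>t. t j - k\<^sup>2 * t (Suc j))"
      by (rule nonvanishing_coord_linear2[OF jj(1) jj(2) jj(3), of 1 _ "- k\<^sup>2"]) simp_all
  qed
  have "generic_eq n (Cword [j, j]) (\<lambda>t. R_op sc (P j) k (t j / t (Suc j)) \<circ> R_op sc (P j) k (t (Suc j) / t j))"
    using j by (intro generic_eqI) (simp add: Cgen_def sact_def)
  then show ?thesis unfolding Cword_Nil by (rule generic_eq_trans[OF _ R])
qed

lemma Cword_square_n: "generic_eq n (Cword [n, n]) (Cword [])"
proof -
  have nn: "n \<in> {1..n}" "n \<noteq> 0" using n2 by auto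
  have K: "generic_eq n (\<lambda>t. K_op sc (P n) kn un (t n / 1) \<circ> K_op sc (P n) kn un (1 / t n)) (\<lambda>t. id)"
  proof (rule hecke_op.generic_eq_K_op_inverse[OF hecke_op_Pn un])
    show "torus n t \<Longrightarrow> t n \<noteq> 0 \<and> (1::complex) \<noteq> 0" for t using nn unfolding torus_def by simp
    show "nonvanishing n (\<lambda>t. 1 - kn * un * t n)"
      by (rule nonvanishing_coord_affine[OF nn(1), of "- (kn * un)" _ 1]) (use kn un in simp_all)
    show "nonvanishing n (\<lambda>t. 1 + kn * inverse un * t n)"
      by (rule nonvanishing_coord_affine[OF nn(1), of "kn * inverse un" _ 1]) (use kn un in simp_all)
    show "nonvanishing n (\<lambda>t. t n - kn * un * 1)"
      by (rule nonvanishing_coord_affine[OF nn(1), of 1 _ "- (kn * un)"]) simp_all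
    show "nonvanishing n (\<lambda>t. t n + kn * inverse un * 1)"
      by (rule nonvanishing_coord_affine[OF nn(1), of 1]) simp_all
  qed
  have "generic_eq n (Cword [n, n]) (\<lambda>t. K_op sc (P n) kn un (t n / 1) \<circ> K_op sc (P n) kn un (1 / t n))"
    using nn by (intro generic_eqI) (simp add: Cgen_def sact_def inverse_eq_divide)
  then show ?thesis unfolding Cword_Nil by (rule generic_eq_trans[OF _ K])
qed

lemma Cword_square: "generic_eq n (Cword [j, j]) (Cword [])"
proof -
  consider "j = 0" | "0 < j \<and> j < n" | "j = n" | "n < j" by linarith
  then show ?thesis
  proof cases
    case 4
    then show ?thesis by (intro generic_eqI) (simp add: Cgen_def sact_def)
  qed (use Cword_square_0 Cword_square_mid Cword_square_n in auto)
qed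

lemma Cword_cox_eq: "cox_eq n x y \<Longrightarrow> generic_eq n (Cword x) (Cword y)"
proof (induction rule: cox_eq.induct)
  case (refl w) then show ?case by (rule generic_eqI) simp
next
  case (sym u w) then show ?case by (blast intro: generic_eq_sym)
next
  case (trans u v w) then show ?case by (blast intro: generic_eq_trans)
next
  case (ctx x y u v)
  let ?W = "wact n q (rev u)"
  have e: "Cword (u @ z @ v) t = Cword u t \<circ> (Cword z (?W t) \<circ> Cword v (wact n q (rev z) (?W t)))" for z t
    by (simp add: Cword_append wact_def)
  have xy: "generic_eq n (\<lambda>t. Cword x (?W t)) (\<lambda>t. Cword y (?W t))"
    using generic_eq_wact[OF q _ ctx.IH] n2 by simp
  have inner: "generic_eq n (\<lambda>t. Cword x (?W t) \<circ> Cword v (wact n q (rev x) (?W t)))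
      (\<lambda>t. Cword y (?W t) \<circ> Cword v (wact n q (rev y) (?W t)))"
    unfolding wact_rev_cox_eq[OF ctx.hyps] by (rule generic_eq_comp[OF xy generic_eqI]) simp
  have "generic_eq n (\<lambda>t. Cword u t \<circ> (Cword x (?W t) \<circ> Cword v (wact n q (rev x) (?W t))))
      (\<lambda>t. Cword u t \<circ> (Cword y (?W t) \<circ> Cword v (wact n q (rev y) (?W t))))"
    using generic_eq_comp[OF generic_eqI[of n "Cword u" "Cword u"] inner] by simp
  then show ?case unfolding e .
next
  case (sq j) show ?case by (rule Cword_square)
next
  case braid0 show ?case by (rule generic_eqI) (rule Cword_braid0)
next
  case braidn show ?case by (rule generic_eqI) (rule Cword_braidn)
next
  case (braidi i) then show ?case by (intro generic_eqI Cword_braid3)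
next
  case (comm j i) then show ?case by (intro generic_eqI Cword_commute)
qed

lemma rat_end_Cgen: "rat_end sc n (Cgen j)"
proof -
  have qh0: "qh \<noteq> 0" using qh q by auto
  have one: "1 \<in> {1..n}" and nn: "n \<in> {1..n}" using n2 by auto
  consider "j = 0" | "0 < j \<and> j < n" | "j = n" | "n < j" by linarith
  then show ?thesis
  proof cases
    case 1
    have "rat_end sc n (\<lambda>t. K_op sc (P 0) k0 u0 (qh / t 1))"
    proof (rule hecke_op.rat_end_K_op[OF hecke_op_P0 u0 poly_fun_const poly_fun_coord[OF one]])
      show "torus n t \<Longrightarrow> t 1 \<noteq> 0" for t using one unfolding torus_def by blast
      show "nonvanishing n (\<lambda>t. t 1 - k0 * u0 * qh)"
        by (rule nonvanishing_coord_affine[OF one, of 1 _ "- (k0 * u0 * qh)"]) simp_all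
      show "nonvanishing n (\<lambda>t. t 1 + k0 * inverse u0 * qh)"
        by (rule nonvanishing_coord_affine[OF one, of 1]) simp_all
    qed
    then show ?thesis using 1 by (simp add: Cgen_def[abs_def])
  next
    case 2
    have jj: "j \<in> {1..n}" "Suc j \<in> {1..n}" "j \<noteq> Suc j" using 2 by auto
    have "rat_end sc n (\<lambda>t. R_op sc (P j) k (t j / t (Suc j)))"
    proof (rule hecke_op.rat_end_R_op[OF hecke_op_Pi poly_fun_coord[OF jj(1)] poly_fun_coord[OF jj(2)]])
      show "torus n t \<Longrightarrow> t (Suc j) \<noteq> 0" for t using jj unfolding torus_def by blast
      show "nonvanishing n (\<lambda>t. t (Suc j) - k\<^sup>2 * t j)"
        by (rule nonvanishing_coord_linear2[OF jj(2) jj(1) jj(3), of 1 _ "- k\<^sup>2"]) simp_all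
    qed (use 2 in auto)
    then show ?thesis using 2 by (simp add: Cgen_def[abs_def])
  next
    case 3
    have "rat_end sc n (\<lambda>t. K_op sc (P n) kn un (t n / 1))"
    proof (rule hecke_op.rat_end_K_op[OF hecke_op_Pn un poly_fun_coord[OF nn] poly_fun_const])
      show "nonvanishing n (\<lambda>t. 1 - kn * un * t n)"
        by (rule nonvanishing_coord_affine[OF nn, of "- (kn * un)" _ 1]) (use kn un in simp_all)
      show "nonvanishing n (\<lambda>t. 1 + kn * inverse un * t n)"
        by (rule nonvanishing_coord_affine[OF nn, of "kn * inverse un" _ 1]) (use kn un in simp_all)
    qed simp
    then show ?thesis using 3 n2 by (simp add: Cgen_def[abs_def])
  next
    case 4
    then have "Cgen j = (\<lambda>t. id)" by (simp add: Cgen_def fun_eq_iff)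
    then show ?thesis using rat_end_id[OF vs] by simp
  qed
qed

lemma rat_end_Cword: "rat_end sc n (Cword w)"
proof (induction w)
  case Nil
  show ?case unfolding Cword_Nil by (rule rat_end_id[OF vs])
next
  case (Cons j w)
  have "rat_end sc n (\<lambda>t. Cword w (sact n q j t))" by (rule rat_end_sact[OF Cons q]) (use n2 in simp)
  then show ?case unfolding Cword_Cons by (rule rat_end_comp[OF vs rat_end_Cgen])
qed

lemma is_C_family_Cword: "is_C_family sc n k0 k kn P q qh u0 un Cword"
  unfolding is_C_family_def
proof (intro conjI allI impI)
  show "generic_eq n (Cword (w @ w')) (\<lambda>t. Cword w t \<circ> Cword w' (wact n q (rev w) t))" for w w'
    by (rule generic_eqI) (simp add: Cword_append)
  show "generic_eq n (Cword [0]) (\<lambda>t. K0V sc n k0 k kn P u0 (qh / t 1))"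
    by (rule generic_eqI) (simp add: Cgen_def K0V_eq)
  show "generic_eq n (Cword [i]) (\<lambda>t. RV sc n k0 k kn P i (t i / t (Suc i)))" if "1 \<le> i \<and> i < n" for i
    using that by (intro generic_eqI) (simp add: Cgen_def RV_eq)
  show "generic_eq n (Cword [n]) (\<lambda>t. KnV sc n k0 k kn P un (t n))"
    using n2 by (intro generic_eqI) (simp add: Cgen_def KnV_eq)
qed (auto simp: rat_end_Cword Cword_cox_eq Cword_Nil intro: generic_eqI)

lemma Cgen_generic_eq:
  assumes C: "is_C_family sc n k0 k kn P q qh u0 un C" and j: "j \<le> n"
  shows "generic_eq n (C [j]) (Cgen j)"
proof -
  consider "j = 0" | "0 < j \<and> j < n" | "j = n" using j by linarith
  then show ?thesis
    using C n2 unfolding is_C_family_def Cgen_def[abs_def]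
    by cases (auto simp: K0V_eq KnV_eq RV_eq)
qed

lemma is_C_family_unique:
  assumes C: "is_C_family sc n k0 k kn P q qh u0 un C"
  shows "valid_word n w \<Longrightarrow> generic_eq n (Cword w) (C w)"
proof (induction w)
  case Nil
  have "generic_eq n (C []) (\<lambda>t. id)" using C unfolding is_C_family_def by blast
  then show ?case unfolding Cword_Nil by (rule generic_eq_sym)
next
  case (Cons j w)
  have j: "j \<le> n" and w: "valid_word n w" and vj: "valid_word n [j]"
    using Cons.prems by (auto simp: valid_word_def)
  have "generic_eq n (C ([j] @ w)) (\<lambda>t. C [j] t \<circ> C w (wact n q (rev [j]) t))"
    using C w vj unfolding is_C_family_def by blast
  then have split: "generic_eq n (C (j # w)) (\<lambda>t. C [j] t \<circ> C w (sact n q j t))"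
    by (simp add: wact_def)
  have "generic_eq n (\<lambda>t. Cgen j t \<circ> Cword w (sact n q j t)) (\<lambda>t. C [j] t \<circ> C w (sact n q j t))"
    using generic_eq_sym[OF Cgen_generic_eq[OF C j]] generic_eq_sact[OF Cons.IH[OF w] q] n2
    by (intro generic_eq_comp) auto
  then show ?case unfolding Cword_Cons using generic_eq_sym[OF split] by (rule generic_eq_trans)
qed

end

theorem mainTheorem8:
  fixes sc :: "complex \<Rightarrow> 'v::ab_group_add \<Rightarrow> 'v"
    and n :: nat and k0 k kn q qh u0 un :: complex
    and P :: "nat \<Rightarrow> 'v \<Rightarrow> 'v"
  assumes "vector_space sc"
    and "n \<ge> 2"
    and "k0 \<noteq> 0" and "k \<noteq> 0" and "kn \<noteq> 0"
    and "q \<noteq> 0" and "qh ^ 2 = q"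
    and "u0 \<noteq> 0" and "un \<noteq> 0"
    and "is_rep sc n k0 k kn P"
  shows "\<exists>C. is_C_family sc n k0 k kn P q qh u0 un C \<and>
           (\<forall>C'. is_C_family sc n k0 k kn P q qh u0 un C' \<longrightarrow>
                  (\<forall>w. valid_word n w \<longrightarrow> generic_eq n (C w) (C' w)))"
proof -
  interpret hecke_rep sc n k0 k kn q qh u0 un P by (rule hecke_rep.intro) (use assms in auto)
  show ?thesis using is_C_family_Cword is_C_family_unique by blast
qed

end
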